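(* Let $N\ge2$, let $\Omega\subset\mathbb{R}^N$ be a bounded open set with $C^2$ boundary, and let $g\in L^\infty(\mathbb{R}^N\setminus\Omega)$ satisfy $\int_1^\infty\frac{|\tilde g(r)|}{r}dr<\infty$. Let $\tilde r_\Omega:=\sup_{x\in\Omega}|x|+\operatorname{diam}\Omega+1$. Then for every $\varepsilon>0$ and every $r>\tilde r_\Omega$, the function $$x\mapsto\delta_\Omega^\varepsilon(x)\int_{B_r\setminus\Omega}\frac{g(y)}{|x-y|^N}dy$$ is continuous on $\Omega$ and extends continuously to $\overline\Omega$, and the limit $$\lim_{r\to\infty}\delta_\Omega^\varepsilon(x)\int_{B_r\setminus\Omega}\frac{g(y)}{|x-y|^N}dy$$ exists uniformly in $x\in\Omega$.
   Context: $B_r$ is the ball of radius $r$ centered at $0$, $\tilde g(r)=\frac{1}{r^{N-1}\omega_{N-1}}\int_{S_r}g\,d\sigma$ the spherical mean of $g$ over the sphere $S_r$ of radius $r$ centered at $0$ ($\omega_{N-1}$ the area of the unit sphere), and $\delta_\Omega(x)=\operatorname{dist}(x,\partial\Omega)$. *)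

theory Defs
  imports "HOL-Analysis.Analysis"
begin

definition C2_on :: "'a::euclidean_space set \<Rightarrow> ('a \<Rightarrow> real) \<Rightarrow> bool" where
  "C2_on S f \<longleftrightarrow>
     (\<exists>(f' :: 'a \<Rightarrow> ('a \<Rightarrow>\<^sub>L real)) (f'' :: 'a \<Rightarrow> ('a \<Rightarrow>\<^sub>L ('a \<Rightarrow>\<^sub>L real))).
        (\<forall>x\<in>S. (f has_derivative blinfun_apply (f' x)) (at x)) \<and>
        (\<forall>x\<in>S. (f' has_derivative blinfun_apply (f'' x)) (at x)) \<and>
        continuous_on S f'')"

text \<open>C^2 boundary: near every boundary point p, after choosing a unit direction nu,
  the set is the subgraph (in direction nu) of a C^2 function of the component
  orthogonal to nu (the function is applied to the orthogonal projection onto the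
  hyperplane nu-perp, so it is effectively a C^2 function on that hyperplane).\<close>
definition C2_boundary :: "'a::euclidean_space set \<Rightarrow> bool" where
  "C2_boundary \<Omega> \<longleftrightarrow>
     (\<forall>p\<in>frontier \<Omega>. \<exists>r>0. \<exists>(\<nu>::'a) (\<phi>::'a \<Rightarrow> real).
        norm \<nu> = 1 \<and> C2_on UNIV \<phi> \<and>
        \<Omega> \<inter> ball p r = {x \<in> ball p r. x \<bullet> \<nu> < \<phi> (x - (x \<bullet> \<nu>) *\<^sub>R \<nu>)})"

definition bdist :: "'a::euclidean_space set \<Rightarrow> 'a \<Rightarrow> real" where
  "bdist \<Omega> x = infdist x (frontier \<Omega>)"

text \<open>Spherical mean over the sphere of radius r centred at 0:
  (1/(r^(N-1) omega_(N-1))) \<integral>_{S_r} g d\<sigma>. The normalised surface measure on the unit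
  sphere is expressed through the cone construction
  \<sigma>(A) = N |{t\<theta> : 0<t\<le>1, \<theta>\<in>A}|, \<omega>_(N-1) = N |B_1|, giving
  (1/|B_1|) \<integral>_{B_1} g(r x/|x|) dx.\<close>
definition spherical_mean :: "('a::euclidean_space \<Rightarrow> real) \<Rightarrow> real \<Rightarrow> real" where
  "spherical_mean g r =
     (LINT x : ball 0 1 | lebesgue. g (r *\<^sub>R (x /\<^sub>R norm x))) / measure lebesgue (ball (0::'a) 1)"

end

theory Submission
  imports Defs
begin

(* Replace g by a bounded Borel function h that agrees almost everywhere with g outside \<Omega>
   and with 0 on \<Omega>; then the integral in question is the truncated potential
   J r x = \<integral>_{B_r \<setminus> \<Omega>} h(y) |x - y|^(-N) dy. For x in \<Omega> every y outside \<Omega> satisfies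
   |x - y| \<ge> \<delta>(x), so J r is locally Lipschitz on \<Omega> and |J r x| \<le> C N |B_1| log((|x| + r) / \<delta>(x)).
   Since \<delta>^\<epsilon> log(1/\<delta>) = O(\<delta>^(\<epsilon>/2)), the weighted potential \<delta>^\<epsilon> J r tends to 0 at the
   boundary and extends by 0. For large r \<le> R, J R x - J r x is an integral over the annulus
   r \<le> |y| < R; replacing |x - y|^(-N) by |y|^(-N) costs O(1/r) uniformly in x, and in polar
   coordinates the remaining term is N |B_1| \<integral>_r^R h~(s) / s ds, a tail of the convergent
   integral in the hypothesis. So the family is uniformly Cauchy as r \<rightarrow> \<infinity>. *)

lemma abs_integral_le_if_nn_integral_le:
  fixes f :: "'a \<Rightarrow> real"
  assumes "(\<integral>\<^sup>+x. ennreal \<bar>f x\<bar> \<partial>M) \<le> ennreal B" and "0 \<le> B"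
  shows "\<bar>\<integral>x. f x \<partial>M\<bar> \<le> B"
proof (cases "integrable M f")
  case True
  then have "ennreal \<bar>\<integral>x. f x \<partial>M\<bar> \<le> ennreal B"
    using integral_norm_bound_ennreal[of M f] assms(1) by simp
  then show ?thesis
    using assms(2) by simp
next
  case False
  then show ?thesis
    using assms(2) by (simp add: not_integrable_integral_eq)
qed

lemma abs_integral_le_indicator_bound:
  fixes f :: "'a \<Rightarrow> real"
  assumes f: "\<And>x. \<bar>f x\<bar> \<le> K * indicator A x" and "0 \<le> K" "A \<in> sets M" "emeasure M A < \<infinity>"
  shows "\<bar>\<integral>x. f x \<partial>M\<bar> \<le> K * measure M A"
proof (rule abs_integral_le_if_nn_integral_le)
  have "(\<integral>\<^sup>+x. ennreal \<bar>f x\<bar> \<partial>M) \<le> (\<integral>\<^sup>+x. ennreal K * indicator A x \<partial>M)"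
  proof (rule nn_integral_mono)
    fix x
    show "ennreal \<bar>f x\<bar> \<le> ennreal K * indicator A x"
      using f[of x] by (cases "x \<in> A") (auto intro: ennreal_leI)
  qed
  also have "\<dots> = ennreal K * emeasure M A"
    by (rule nn_integral_cmult_indicator) (rule assms(3))
  also have "\<dots> = ennreal (K * measure M A)"
    using assms(2,4) by (simp add: emeasure_eq_ennreal_measure ennreal_mult)
  finally show "(\<integral>\<^sup>+x. ennreal \<bar>f x\<bar> \<partial>M) \<le> ennreal (K * measure M A)" .
  show "0 \<le> K * measure M A"
    using assms(2) by simp
qed

section \<open>Polar coordinates\<close>

lemma nn_integral_powr_tail:
  fixes a p :: real
  assumes "0 < a" "0 < p"
  shows "(\<integral>\<^sup>+t. indicator {a<..} t * ennreal (p * t powr (- p - 1)) \<partial>lborel) = ennreal (a powr - p)"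
proof -
  have "((\<lambda>t. t powr (- p - 1)) has_integral - (a powr (- p - 1 + 1)) / (- p - 1 + 1)) {a..}"
    using assms by (intro has_integral_powr_to_inf) auto
  then have "((\<lambda>t. p * t powr (- p - 1)) has_integral p * (- (a powr (- p - 1 + 1)) / (- p - 1 + 1))) {a..}"
    by (rule has_integral_mult_right)
  moreover have "p * (- (a powr (- p - 1 + 1)) / (- p - 1 + 1)) = a powr - p"
    using assms by simp
  ultimately have "((\<lambda>t. p * t powr (- p - 1)) has_integral a powr - p) {a..}"
    by simp
  then have "(\<integral>\<^sup>+t. ennreal (indicator {a..} t * (p * t powr (- p - 1))) \<partial>lborel) = ennreal (a powr - p)"
    using assms by (intro nn_integral_has_integral_lebesgue) auto
  moreover have "AE t in lborel. ennreal (indicator {a..} t * (p * t powr (- p - 1))) =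
      indicator {a<..} t * ennreal (p * t powr (- p - 1))"
    using AE_lborel_singleton[of a] by eventually_elim (auto simp: indicator_def)
  ultimately show ?thesis
    by (simp add: nn_integral_cong_AE)
qed

lemma nn_integral_lborel_scaleR:
  fixes f :: "'a::euclidean_space \<Rightarrow> ennreal"
  assumes [measurable]: "f \<in> borel_measurable borel" and "0 < c"
  shows "(\<integral>\<^sup>+x. f (c *\<^sub>R x) \<partial>lborel) = ennreal (1 / c ^ DIM('a)) * (\<integral>\<^sup>+y. f y \<partial>lborel)"
proof -
  have "(\<integral>\<^sup>+x. f (c *\<^sub>R x) \<partial>lborel) = (\<integral>\<^sup>+x. f (c *\<^sub>R x)
      \<partial>density (distr lborel borel (\<lambda>y. 0 + (1 / c) *\<^sub>R y)) (\<lambda>_. ennreal (\<bar>1 / c\<bar> ^ DIM('a))))"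
    using lborel_affine[of "1 / c" "0::'a"] assms(2) by simp
  also have "\<dots> = (\<integral>\<^sup>+y. ennreal (\<bar>1 / c\<bar> ^ DIM('a)) * f (c *\<^sub>R (0 + (1 / c) *\<^sub>R y)) \<partial>lborel)"
    by (simp add: nn_integral_density nn_integral_distr)
  also have "\<dots> = ennreal (1 / c ^ DIM('a)) * (\<integral>\<^sup>+y. f y \<partial>lborel)"
  proof -
    have "\<bar>1 / c\<bar> ^ DIM('a) = 1 / c ^ DIM('a)"
      using assms(2) by (simp add: power_divide)
    then show ?thesis
      using assms(2) by (simp add: nn_integral_cmult)
  qed
  finally show ?thesis .
qed

lemma nn_integral_lborel_reflect:
  fixes f :: "'a::euclidean_space \<Rightarrow> ennreal"
  assumes [measurable]: "f \<in> borel_measurable borel"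
  shows "(\<integral>\<^sup>+y. f (x - y) \<partial>lborel) = (\<integral>\<^sup>+z. f z \<partial>lborel)"
proof -
  have reflect: "distr lborel borel ((-) x) = lborel"
    using lborel_affine[of "- 1" x] by (simp add: density_1)
  have "(\<integral>\<^sup>+z. f z \<partial>lborel) = (\<integral>\<^sup>+z. f (x - (x - z)) \<partial>lborel)"
    by simp
  also have "\<dots> = (\<integral>\<^sup>+y. f (x - y) \<partial>distr lborel borel ((-) x))"
    by (rule nn_integral_distr[symmetric]) measurable
  finally show ?thesis
    by (simp only: reflect)
qed

lemma nn_integral_polar_tail:
  fixes y :: "'a::euclidean_space" and c :: ennreal
  assumes "y \<noteq> 0"
  shows "(\<integral>\<^sup>+t. ennreal (real DIM('a) / t ^ Suc DIM('a)) *
      ((if norm y < t then 1 else 0) * ennreal (norm y ^ DIM('a)) * c) \<partial>lborel) = c"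
proof -
  define n where "n = DIM('a)"
  have "(\<integral>\<^sup>+t. ennreal (real n / t ^ Suc n) *
      ((if norm y < t then 1 else 0) * ennreal (norm y ^ n) * c) \<partial>lborel) =
      (\<integral>\<^sup>+t. indicator {norm y<..} t * ennreal (real n * t powr (- real n - 1)) \<partial>lborel) *
      (ennreal (norm y ^ n) * c)"
  proof -
    have "ennreal (real n / t ^ Suc n) * ((if norm y < t then 1 else 0) * ennreal (norm y ^ n) * c) =
        indicator {norm y<..} t * ennreal (real n * t powr (- real n - 1)) * (ennreal (norm y ^ n) * c)" for t
    proof (cases "norm y < t")
      case True
      then have "0 < t"
        using norm_ge_zero[of y] by linarith
      then have "real n / t ^ Suc n = real n * t powr (- real n - 1)"
        by (simp add: powr_diff powr_minus powr_realpow divide_inverse)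
      then show ?thesis
        using True by (simp add: mult_ac)
    qed simp
    then show ?thesis
      by (simp only:) (rule nn_integral_multc, measurable)
  qed
  also have "\<dots> = ennreal (norm y powr - real n) * (ennreal (norm y ^ n) * c)"
    using assms by (subst nn_integral_powr_tail) (auto simp: n_def)
  also have "\<dots> = c"
  proof -
    have "norm y powr - real n * norm y ^ n = 1"
      using assms by (simp add: powr_minus powr_realpow)
    then have "ennreal (norm y powr - real n) * ennreal (norm y ^ n) = 1"
      by (simp flip: ennreal_mult)
    then show ?thesis
      by (simp flip: mult.assoc)
  qed
  finally show ?thesis
    by (simp add: n_def)
qed

lemma nn_integral_unit_ball_scaleR:
  fixes f :: "'a::euclidean_space \<Rightarrow> ennreal"
  assumes [measurable]: "f \<in> borel_measurable borel" and "0 < t"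
  shows "(\<integral>\<^sup>+x. indicator (ball 0 1) x * ennreal (norm x ^ n) * f (t *\<^sub>R x) \<partial>lborel) =
    ennreal (1 / t ^ (n + DIM('a))) * (\<integral>\<^sup>+y. (if norm y < t then 1 else 0) * ennreal (norm y ^ n) * f y \<partial>lborel)"
proof -
  define G where "G y = (if norm y < t then 1 else 0) * ennreal (norm y ^ n) * f y" for y :: 'a
  have [measurable]: "G \<in> borel_measurable borel"
    unfolding G_def by measurable
  have inverse: "ennreal (1 / t ^ n) * ennreal (t ^ n) = 1"
    using \<open>0 < t\<close> by (simp flip: ennreal_mult)
  have "indicator (ball 0 1) x * ennreal (norm x ^ n) * f (t *\<^sub>R x) = ennreal (1 / t ^ n) * G (t *\<^sub>R x)" for x :: 'a
  proof (cases "norm x < 1")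
    case True
    then have "G (t *\<^sub>R x) = ennreal (t ^ n) * (ennreal (norm x ^ n) * f (t *\<^sub>R x))"
      using \<open>0 < t\<close> by (simp add: G_def power_mult_distrib ennreal_mult' mult.assoc)
    then show ?thesis
      using True by (simp only: mult.assoc[symmetric] inverse) simp
  qed (use \<open>0 < t\<close> in \<open>simp add: G_def\<close>)
  then have "(\<integral>\<^sup>+x. indicator (ball 0 1) x * ennreal (norm x ^ n) * f (t *\<^sub>R x) \<partial>lborel) =
      ennreal (1 / t ^ n) * (\<integral>\<^sup>+x. G (t *\<^sub>R x) \<partial>lborel)"
    by (simp add: nn_integral_cmult)
  also have "\<dots> = ennreal (1 / t ^ n) * (ennreal (1 / t ^ DIM('a)) * (\<integral>\<^sup>+y. G y \<partial>lborel))"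
    using \<open>0 < t\<close> by (simp add: nn_integral_lborel_scaleR)
  also have "\<dots> = ennreal (1 / t ^ (n + DIM('a))) * (\<integral>\<^sup>+y. G y \<partial>lborel)"
    using \<open>0 < t\<close> by (simp add: mult.assoc[symmetric] ennreal_mult[symmetric] power_add)
  finally show ?thesis
    by (simp add: G_def)
qed

lemma nn_integral_polar_rescale:
  fixes f :: "'a::euclidean_space \<Rightarrow> ennreal"
  assumes [measurable]: "f \<in> borel_measurable borel"
  shows "(\<integral>\<^sup>+y. ennreal (real DIM('a) / t ^ Suc DIM('a)) *
      ((if norm y < t then 1 else 0) * ennreal (norm y ^ DIM('a)) * f y) \<partial>lborel) =
    indicator {0<..} t * ennreal (real DIM('a) * t ^ (DIM('a) - 1)) *
      (\<integral>\<^sup>+x. indicator (ball 0 1) x * ennreal (norm x ^ DIM('a)) * f (t *\<^sub>R x) \<partial>lborel)"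
proof (cases "0 < t")
  case False
  then have "\<not> norm y < t" for y :: 'a
    using norm_ge_zero[of y] by linarith
  then show ?thesis
    using False by simp
next
  case True
  have "real DIM('a) / t ^ Suc DIM('a) = real DIM('a) * t ^ (DIM('a) - 1) * (1 / t ^ (DIM('a) + DIM('a)))"
    using True power_minus_mult[of "DIM('a)" t] by (simp add: power_add field_simps)
  then have weight: "ennreal (real DIM('a) / t ^ Suc DIM('a)) =
      ennreal (real DIM('a) * t ^ (DIM('a) - 1)) * ennreal (1 / t ^ (DIM('a) + DIM('a)))"
    using True by (simp only: ennreal_mult[symmetric] mult_nonneg_nonneg of_nat_0_le_iff zero_le_power
        less_imp_le zero_le_divide_1_iff)
  have "(\<integral>\<^sup>+y. ennreal (real DIM('a) / t ^ Suc DIM('a)) *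
      ((if norm y < t then 1 else 0) * ennreal (norm y ^ DIM('a)) * f y) \<partial>lborel) =
      ennreal (real DIM('a) / t ^ Suc DIM('a)) *
        (\<integral>\<^sup>+y. (if norm y < t then 1 else 0) * ennreal (norm y ^ DIM('a)) * f y \<partial>lborel)"
    by (rule nn_integral_cmult) measurable
  also have "\<dots> = ennreal (real DIM('a) * t ^ (DIM('a) - 1)) * (ennreal (1 / t ^ (DIM('a) + DIM('a))) *
        (\<integral>\<^sup>+y. (if norm y < t then 1 else 0) * ennreal (norm y ^ DIM('a)) * f y \<partial>lborel))"
    by (simp only: weight mult.assoc)
  also have "ennreal (1 / t ^ (DIM('a) + DIM('a))) *
      (\<integral>\<^sup>+y. (if norm y < t then 1 else 0) * ennreal (norm y ^ DIM('a)) * f y \<partial>lborel) =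
      (\<integral>\<^sup>+x. indicator (ball 0 1) x * ennreal (norm x ^ DIM('a)) * f (t *\<^sub>R x) \<partial>lborel)"
    using True by (intro nn_integral_unit_ball_scaleR[symmetric]) auto
  finally show ?thesis
    using True by simp
qed

lemma nn_integral_polar_ray:
  fixes f :: "'a::euclidean_space \<Rightarrow> ennreal"
  assumes [measurable]: "f \<in> borel_measurable borel" and "x \<noteq> 0"
  shows "(\<integral>\<^sup>+s. indicator {0<..} s * ennreal (real DIM('a) * s ^ (DIM('a) - 1)) * f (s *\<^sub>R (x /\<^sub>R norm x)) \<partial>lborel) =
    ennreal (norm x ^ DIM('a)) *
      (\<integral>\<^sup>+t. indicator {0<..} t * ennreal (real DIM('a) * t ^ (DIM('a) - 1)) * f (t *\<^sub>R x) \<partial>lborel)"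
proof -
  define n where "n = DIM('a)"
  define w where "w s = indicator {0<..} s * ennreal (real n * s ^ (n - 1))" for s :: real
  have [measurable]: "w \<in> borel_measurable borel"
    unfolding w_def by measurable
  have "(\<integral>\<^sup>+s. w s * f (s *\<^sub>R (x /\<^sub>R norm x)) \<partial>lborel) =
      ennreal \<bar>norm x\<bar> * (\<integral>\<^sup>+t. w (0 + norm x * t) * f ((0 + norm x * t) *\<^sub>R (x /\<^sub>R norm x)) \<partial>lborel)"
    by (rule nn_integral_real_affine) (use assms(2) in auto)
  also have "(\<integral>\<^sup>+t. w (0 + norm x * t) * f ((0 + norm x * t) *\<^sub>R (x /\<^sub>R norm x)) \<partial>lborel) =
      (\<integral>\<^sup>+t. ennreal (norm x ^ (n - 1)) * (w t * f (t *\<^sub>R x)) \<partial>lborel)"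
    using assms(2) by (auto simp: w_def indicator_def zero_less_mult_iff power_mult_distrib
        ennreal_mult'[symmetric] mult_ac intro!: nn_integral_cong)
  also have "\<dots> = ennreal (norm x ^ (n - 1)) * (\<integral>\<^sup>+t. w t * f (t *\<^sub>R x) \<partial>lborel)"
    by (rule nn_integral_cmult) measurable
  also have "ennreal \<bar>norm x\<bar> * (ennreal (norm x ^ (n - 1)) * (\<integral>\<^sup>+t. w t * f (t *\<^sub>R x) \<partial>lborel)) =
      ennreal (norm x ^ n) * (\<integral>\<^sup>+t. w t * f (t *\<^sub>R x) \<partial>lborel)"
    using power_minus_mult[of n "norm x"] by (simp add: n_def mult.commute flip: mult.assoc ennreal_mult)
  finally show ?thesis
    by (simp add: w_def n_def)
qed

(* Writing 1 = |y|^N \<integral>_{|y|}^\<infinity> N t^(-N-1) dt and exchanging the order of integration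
   twice, with the substitutions y = t x and s = |x| t in between, turns \<integral> f into the
   iterated integral over radii and the unit ball. *)
lemma nn_integral_polar:
  fixes f :: "'a::euclidean_space \<Rightarrow> ennreal"
  assumes [measurable]: "f \<in> borel_measurable borel"
  shows "(\<integral>\<^sup>+y. f y \<partial>lborel) =
    (\<integral>\<^sup>+s. indicator {0<..} s * ennreal (real DIM('a) * s ^ (DIM('a) - 1)) *
       (\<integral>\<^sup>+x. indicator (ball 0 1) x * f (s *\<^sub>R (x /\<^sub>R norm x)) \<partial>lborel) \<partial>lborel)"
proof -
  define w where "w s = indicator {0<..} s * ennreal (real DIM('a) * s ^ (DIM('a) - 1))" for s :: real
  define k where "k t y = ennreal (real DIM('a) / t ^ Suc DIM('a)) *
    ((if norm y < t then 1 else 0) * ennreal (norm y ^ DIM('a)) * f y)" for t and y :: 'a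
  define m where "m x = indicator (ball 0 1) x * ennreal (norm x ^ DIM('a))" for x :: 'a
  have [measurable]: "ball (0::'a) 1 \<in> sets borel"
    by simp
  have [measurable]: "w \<in> borel_measurable borel" "m \<in> borel_measurable borel"
    "(\<lambda>(t, y). k t y) \<in> borel_measurable (lborel \<Otimes>\<^sub>M lborel)"
    unfolding w_def k_def m_def by measurable
  have tail: "(\<integral>\<^sup>+t. k t y \<partial>lborel) = f y" if "y \<noteq> 0" for y
    unfolding k_def using that by (rule nn_integral_polar_tail)
  have rescale: "(\<integral>\<^sup>+y. k t y \<partial>lborel) = w t * (\<integral>\<^sup>+x. m x * f (t *\<^sub>R x) \<partial>lborel)" for t
    unfolding k_def w_def m_def using assms by (rule nn_integral_polar_rescale)
  have ray: "(\<integral>\<^sup>+t. w t * (m x * f (t *\<^sub>R x)) \<partial>lborel) =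
      (\<integral>\<^sup>+s. w s * (indicator (ball 0 1) x * f (s *\<^sub>R (x /\<^sub>R norm x))) \<partial>lborel)" if "x \<noteq> 0" for x
  proof -
    have "(\<integral>\<^sup>+t. w t * (m x * f (t *\<^sub>R x)) \<partial>lborel) = (\<integral>\<^sup>+t. m x * (w t * f (t *\<^sub>R x)) \<partial>lborel)"
      by (intro nn_integral_cong) (rule mult.left_commute)
    also have "\<dots> = m x * (\<integral>\<^sup>+t. w t * f (t *\<^sub>R x) \<partial>lborel)"
      by (rule nn_integral_cmult) measurable
    also have "\<dots> = indicator (ball 0 1) x * (ennreal (norm x ^ DIM('a)) * (\<integral>\<^sup>+t. w t * f (t *\<^sub>R x) \<partial>lborel))"
      by (simp add: m_def mult.assoc)
    also have "ennreal (norm x ^ DIM('a)) * (\<integral>\<^sup>+t. w t * f (t *\<^sub>R x) \<partial>lborel) =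
        (\<integral>\<^sup>+s. w s * f (s *\<^sub>R (x /\<^sub>R norm x)) \<partial>lborel)"
      unfolding w_def by (rule nn_integral_polar_ray[OF assms that, symmetric])
    also have "indicator (ball 0 1) x * \<dots> =
        (\<integral>\<^sup>+s. indicator (ball 0 1) x * (w s * f (s *\<^sub>R (x /\<^sub>R norm x))) \<partial>lborel)"
      by (rule nn_integral_cmult[symmetric]) measurable
    also have "\<dots> = (\<integral>\<^sup>+s. w s * (indicator (ball 0 1) x * f (s *\<^sub>R (x /\<^sub>R norm x))) \<partial>lborel)"
      by (intro nn_integral_cong) (rule mult.left_commute)
    finally show ?thesis .
  qed
  have "(\<integral>\<^sup>+y. f y \<partial>lborel) = (\<integral>\<^sup>+y. (\<integral>\<^sup>+t. k t y \<partial>lborel) \<partial>lborel)"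
    using AE_lborel_singleton[of 0] by (intro nn_integral_cong_AE) (auto simp: tail)
  also have "\<dots> = (\<integral>\<^sup>+t. (\<integral>\<^sup>+y. k t y \<partial>lborel) \<partial>lborel)"
    by (rule lborel_pair.Fubini') measurable
  also have "\<dots> = (\<integral>\<^sup>+t. (\<integral>\<^sup>+x. w t * (m x * f (t *\<^sub>R x)) \<partial>lborel) \<partial>lborel)"
    by (simp only: rescale, intro nn_integral_cong nn_integral_cmult[symmetric]) measurable
  also have "\<dots> = (\<integral>\<^sup>+x. (\<integral>\<^sup>+t. w t * (m x * f (t *\<^sub>R x)) \<partial>lborel) \<partial>lborel)"
    by (rule lborel_pair.Fubini') measurable
  also have "\<dots> = (\<integral>\<^sup>+x. (\<integral>\<^sup>+s. w s * (indicator (ball 0 1) x * f (s *\<^sub>R (x /\<^sub>R norm x))) \<partial>lborel) \<partial>lborel)"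
    using AE_lborel_singleton[of 0] by (intro nn_integral_cong_AE) (auto simp: ray)
  also have "\<dots> = (\<integral>\<^sup>+s. (\<integral>\<^sup>+x. w s * (indicator (ball 0 1) x * f (s *\<^sub>R (x /\<^sub>R norm x))) \<partial>lborel) \<partial>lborel)"
    by (rule lborel_pair.Fubini'[symmetric]) measurable
  also have "\<dots> = (\<integral>\<^sup>+s. w s * (\<integral>\<^sup>+x. indicator (ball 0 1) x * f (s *\<^sub>R (x /\<^sub>R norm x)) \<partial>lborel) \<partial>lborel)"
    by (intro nn_integral_cong nn_integral_cmult) measurable
  finally show ?thesis
    by (simp only: w_def)
qed

lemma nn_integral_polar_radial_factor:
  fixes \<phi> :: "real \<Rightarrow> ennreal" and f :: "'a::euclidean_space \<Rightarrow> ennreal"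
  assumes [measurable]: "\<phi> \<in> borel_measurable borel" "f \<in> borel_measurable borel"
  shows "(\<integral>\<^sup>+y. \<phi> (norm y) * f y \<partial>lborel) =
    (\<integral>\<^sup>+s. indicator {0<..} s * ennreal (real DIM('a) * s ^ (DIM('a) - 1)) * \<phi> s *
      (\<integral>\<^sup>+x. indicator (ball 0 1) x * f (s *\<^sub>R (x /\<^sub>R norm x)) \<partial>lborel) \<partial>lborel)"
proof -
  have [measurable]: "ball (0::'a) 1 \<in> sets borel"
    by simp
  have sphere: "(\<integral>\<^sup>+x. indicator (ball 0 1) x * (\<phi> (norm (s *\<^sub>R (x /\<^sub>R norm x))) * f (s *\<^sub>R (x /\<^sub>R norm x))) \<partial>lborel) =
      \<phi> s * (\<integral>\<^sup>+x. indicator (ball 0 1) x * f (s *\<^sub>R (x /\<^sub>R norm x)) \<partial>lborel)" if "0 < s" for s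
  proof -
    have "AE x in lborel. indicator (ball 0 1) x * (\<phi> (norm (s *\<^sub>R (x /\<^sub>R norm x))) * f (s *\<^sub>R (x /\<^sub>R norm x))) =
        \<phi> s * (indicator (ball 0 1) x * f (s *\<^sub>R (x /\<^sub>R norm x)))"
      using AE_lborel_singleton[of "0::'a"]
    proof eventually_elim
      case (elim x)
      then have "norm (s *\<^sub>R (x /\<^sub>R norm x)) = s"
        using that by simp
      then show ?case
        by (simp add: mult.left_commute)
    qed
    then show ?thesis
      by (simp add: nn_integral_cong_AE nn_integral_cmult)
  qed
  have "(\<integral>\<^sup>+y. \<phi> (norm y) * f y \<partial>lborel) =
      (\<integral>\<^sup>+s. indicator {0<..} s * ennreal (real DIM('a) * s ^ (DIM('a) - 1)) *
        (\<integral>\<^sup>+x. indicator (ball 0 1) x * (\<phi> (norm (s *\<^sub>R (x /\<^sub>R norm x))) * f (s *\<^sub>R (x /\<^sub>R norm x))) \<partial>lborel) \<partial>lborel)"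
    by (rule nn_integral_polar) measurable
  also have "\<dots> = (\<integral>\<^sup>+s. indicator {0<..} s * ennreal (real DIM('a) * s ^ (DIM('a) - 1)) * \<phi> s *
      (\<integral>\<^sup>+x. indicator (ball 0 1) x * f (s *\<^sub>R (x /\<^sub>R norm x)) \<partial>lborel) \<partial>lborel)"
  proof (rule nn_integral_cong)
    fix s :: real
    show "indicator {0<..} s * ennreal (real DIM('a) * s ^ (DIM('a) - 1)) *
        (\<integral>\<^sup>+x. indicator (ball 0 1) x * (\<phi> (norm (s *\<^sub>R (x /\<^sub>R norm x))) * f (s *\<^sub>R (x /\<^sub>R norm x))) \<partial>lborel) =
        indicator {0<..} s * ennreal (real DIM('a) * s ^ (DIM('a) - 1)) * \<phi> s *
        (\<integral>\<^sup>+x. indicator (ball 0 1) x * f (s *\<^sub>R (x /\<^sub>R norm x)) \<partial>lborel)"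
      by (cases "0 < s") (simp_all only: sphere mult.assoc, simp)
  qed
  finally show ?thesis .
qed

lemma nn_integral_radial:
  fixes \<phi> :: "real \<Rightarrow> ennreal"
  assumes [measurable]: "\<phi> \<in> borel_measurable borel"
  shows "(\<integral>\<^sup>+y. \<phi> (norm (y::'a::euclidean_space)) \<partial>lborel) = emeasure lborel (ball (0::'a) 1) *
    (\<integral>\<^sup>+s. indicator {0<..} s * ennreal (real DIM('a) * s ^ (DIM('a) - 1)) * \<phi> s \<partial>lborel)"
proof -
  have "(\<integral>\<^sup>+y. \<phi> (norm (y::'a)) \<partial>lborel) = (\<integral>\<^sup>+y. \<phi> (norm (y::'a)) * 1 \<partial>lborel)"
    by simp
  also have "\<dots> = (\<integral>\<^sup>+s. indicator {0<..} s * ennreal (real DIM('a) * s ^ (DIM('a) - 1)) * \<phi> s *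
      emeasure lborel (ball (0::'a) 1) \<partial>lborel)"
    by (subst nn_integral_polar_radial_factor) simp_all
  also have "\<dots> = (\<integral>\<^sup>+s. indicator {0<..} s * ennreal (real DIM('a) * s ^ (DIM('a) - 1)) * \<phi> s \<partial>lborel) *
      emeasure lborel (ball (0::'a) 1)"
    by (rule nn_integral_multc) measurable
  finally show ?thesis
    by (simp only: ac_simps)
qed

lemma nn_integral_radial_power:
  fixes \<psi> :: "real \<Rightarrow> real"
  assumes [measurable]: "\<psi> \<in> borel_measurable borel" and "\<And>s. a \<le> s \<Longrightarrow> 0 \<le> \<psi> s" and "0 < a"
  shows "(\<integral>\<^sup>+y. indicator {a..} (norm (y::'a)) * ennreal (\<psi> (norm y) / norm y ^ DIM('a)) \<partial>lborel) =
    ennreal (real DIM('a) * measure lborel (ball (0::'a::euclidean_space) 1)) *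
    (\<integral>\<^sup>+s. indicator {a..} s * ennreal (\<psi> s / s) \<partial>lborel)"
proof -
  have pointwise: "indicator {0<..} s * ennreal (real DIM('a) * s ^ (DIM('a) - 1)) *
      (indicator {a..} s * ennreal (\<psi> s / s ^ DIM('a))) =
      ennreal (real DIM('a)) * (indicator {a..} s * ennreal (\<psi> s / s))" for s
  proof (cases "a \<le> s")
    case True
    then have "0 < s"
      using \<open>0 < a\<close> by linarith
    then have "real DIM('a) * s ^ (DIM('a) - 1) * (\<psi> s / s ^ DIM('a)) = real DIM('a) * (\<psi> s / s)"
      by (simp add: field_simps flip: power_minus_mult[of "DIM('a)" s])
    then show ?thesis
      using True \<open>0 < s\<close> assms(2)[OF True] by (simp add: ennreal_mult[symmetric])
  qed simp
  have "(\<integral>\<^sup>+y. indicator {a..} (norm (y::'a)) * ennreal (\<psi> (norm y) / norm y ^ DIM('a)) \<partial>lborel) =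
      emeasure lborel (ball (0::'a) 1) * (\<integral>\<^sup>+s. indicator {0<..} s *
        ennreal (real DIM('a) * s ^ (DIM('a) - 1)) * (indicator {a..} s * ennreal (\<psi> s / s ^ DIM('a))) \<partial>lborel)"
    by (rule nn_integral_radial[where \<phi> = "\<lambda>s. indicator {a..} s * ennreal (\<psi> s / s ^ DIM('a))"]) measurable
  also have "\<dots> = emeasure lborel (ball (0::'a) 1) *
      (ennreal (real DIM('a)) * (\<integral>\<^sup>+s. indicator {a..} s * ennreal (\<psi> s / s) \<partial>lborel))"
    by (simp only: pointwise, subst nn_integral_cmult) simp_all
  also have "emeasure lborel (ball (0::'a) 1) = ennreal (measure lborel (ball (0::'a) 1))"
    using emeasure_lborel_ball_finite[of "0::'a" 1] by (simp add: emeasure_eq_ennreal_measure)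
  finally show ?thesis
    by (simp add: ennreal_mult mult_ac)
qed

section \<open>Spherical means\<close>

lemma spherical_mean_lborel:
  fixes h :: "'a::euclidean_space \<Rightarrow> real"
  assumes [measurable]: "h \<in> borel_measurable borel"
  shows "spherical_mean h s =
    (\<integral>x. indicator (ball 0 1) x * h (s *\<^sub>R (x /\<^sub>R norm x)) \<partial>lborel) / measure lborel (ball (0::'a) 1)"
proof -
  have [measurable]: "ball (0::'a) 1 \<in> sets borel"
    by simp
  have "(LINT x : ball 0 1 | lebesgue. h (s *\<^sub>R (x /\<^sub>R norm x))) =
      (\<integral>x. indicator (ball (0::'a) 1) x *\<^sub>R h (s *\<^sub>R (x /\<^sub>R norm x)) \<partial>lborel)"
    unfolding set_lebesgue_integral_def by (rule integral_completion) measurable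
  then show ?thesis
    by (simp add: spherical_mean_def)
qed

lemma borel_measurable_spherical_mean [measurable]:
  fixes h :: "'a::euclidean_space \<Rightarrow> real"
  assumes [measurable]: "h \<in> borel_measurable borel"
  shows "spherical_mean h \<in> borel_measurable borel"
proof -
  have [measurable]: "ball (0::'a) 1 \<in> sets borel"
    by simp
  show ?thesis
    unfolding spherical_mean_lborel[OF assms, abs_def] by measurable
qed

lemma integrable_ball_radial_projection:
  fixes h :: "'a::euclidean_space \<Rightarrow> real"
  assumes [measurable]: "h \<in> borel_measurable borel" and "\<And>y. \<bar>h y\<bar> \<le> C"
  shows "integrable lborel (\<lambda>x. indicator (ball (0::'a) 1) x * h (s *\<^sub>R (x /\<^sub>R norm x)))"
proof -
  have [measurable]: "ball (0::'a) 1 \<in> sets borel"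
    by simp
  show ?thesis
    by (rule integrableI_bounded_set[where A = "ball 0 1" and B = C])
      (use assms(2) emeasure_lborel_ball_finite[of "0::'a" 1] in \<open>auto simp: indicator_def\<close>)
qed

lemma abs_spherical_mean_le:
  fixes h :: "'a::euclidean_space \<Rightarrow> real"
  assumes [measurable]: "h \<in> borel_measurable borel" and h: "\<And>y. \<bar>h y\<bar> \<le> C"
  shows "\<bar>spherical_mean h s\<bar> \<le> C"
proof -
  have "\<bar>\<integral>x. indicator (ball (0::'a) 1) x * h (s *\<^sub>R (x /\<^sub>R norm x)) \<partial>lborel\<bar> \<le>
      C * measure lborel (ball (0::'a) 1)"
    using h order_trans[OF abs_ge_zero h] emeasure_lborel_ball_finite[of "0::'a" 1]
    by (intro abs_integral_le_indicator_bound) (auto simp: indicator_def)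
  then show ?thesis
    using content_ball_pos[of 1 "0::'a"] by (simp add: spherical_mean_lborel divide_le_eq)
qed

lemma spherical_mean_nonneg:
  fixes h :: "'a::euclidean_space \<Rightarrow> real"
  assumes [measurable]: "h \<in> borel_measurable borel" and "\<And>y. 0 \<le> h y"
  shows "0 \<le> spherical_mean h s"
proof -
  have "0 \<le> (\<integral>x. indicator (ball (0::'a) 1) x * h (s *\<^sub>R (x /\<^sub>R norm x)) \<partial>lborel)"
    using assms(2) by (intro Bochner_Integration.integral_nonneg) (simp add: indicator_def)
  then show ?thesis
    by (simp add: spherical_mean_lborel)
qed

lemma spherical_mean_diff:
  fixes h1 h2 :: "'a::euclidean_space \<Rightarrow> real"
  assumes [measurable]: "h1 \<in> borel_measurable borel" "h2 \<in> borel_measurable borel"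
    and "\<And>y. \<bar>h1 y\<bar> \<le> C" "\<And>y. \<bar>h2 y\<bar> \<le> C"
  shows "spherical_mean (\<lambda>y. h1 y - h2 y) s = spherical_mean h1 s - spherical_mean h2 s"
proof -
  have "(\<integral>x. indicator (ball (0::'a) 1) x * (h1 (s *\<^sub>R (x /\<^sub>R norm x)) - h2 (s *\<^sub>R (x /\<^sub>R norm x))) \<partial>lborel) =
      (\<integral>x. indicator (ball (0::'a) 1) x * h1 (s *\<^sub>R (x /\<^sub>R norm x)) \<partial>lborel) -
      (\<integral>x. indicator (ball (0::'a) 1) x * h2 (s *\<^sub>R (x /\<^sub>R norm x)) \<partial>lborel)"
    using integrable_ball_radial_projection[OF assms(1,3)] integrable_ball_radial_projection[OF assms(2,4)]
    by (simp add: right_diff_distrib)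
  then show ?thesis
    by (simp add: spherical_mean_lborel diff_divide_distrib)
qed

lemma AE_radial_projection_notin_null:
  fixes Z :: "'a::euclidean_space set"
  assumes [measurable]: "Z \<in> sets borel" and "emeasure lborel Z = 0"
  shows "AE s in lborel. 0 < s \<longrightarrow> (AE x in lborel. x \<in> ball 0 1 \<longrightarrow> s *\<^sub>R (x /\<^sub>R norm x) \<notin> Z)"
proof -
  have [measurable]: "ball (0::'a) 1 \<in> sets borel"
    by simp
  define P where "P s = (\<integral>\<^sup>+x. indicator (ball (0::'a) 1) x * indicator Z (s *\<^sub>R (x /\<^sub>R norm x)) \<partial>lborel)"
    for s :: real
  define W where "W s = indicator {0<..} s * ennreal (real DIM('a) * s ^ (DIM('a) - 1)) * P s" for s
  have [measurable]: "W \<in> borel_measurable lborel"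
    unfolding W_def P_def by measurable
  have "(\<integral>\<^sup>+s. W s \<partial>lborel) = (\<integral>\<^sup>+y. indicator Z y \<partial>lborel)"
    unfolding W_def P_def by (rule nn_integral_polar[symmetric]) measurable
  also have "\<dots> = 0"
    using assms(2) by simp
  finally have "AE s in lborel. W s = 0"
    by (simp add: nn_integral_0_iff_AE)
  then show ?thesis
  proof (rule eventually_mono, intro impI)
    fix s :: real
    assume "W s = 0" and "0 < s"
    then have "P s = 0"
      by (simp add: W_def)
    moreover have "(\<lambda>x. indicator (ball (0::'a) 1) x * indicator Z (s *\<^sub>R (x /\<^sub>R norm x)) :: ennreal)
        \<in> borel_measurable lborel"
      by measurable
    ultimately have "AE x in lborel. indicator (ball (0::'a) 1) x * indicator Z (s *\<^sub>R (x /\<^sub>R norm x)) = (0::ennreal)"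
      by (simp add: P_def nn_integral_0_iff_AE)
    then show "AE x in lborel. x \<in> ball 0 1 \<longrightarrow> s *\<^sub>R (x /\<^sub>R norm x) \<notin> Z"
      by (rule eventually_mono) (auto simp: indicator_def)
  qed
qed

lemma AE_spherical_mean_eq:
  fixes g h :: "'a::euclidean_space \<Rightarrow> real"
  assumes [measurable]: "h \<in> borel_measurable borel" and "AE y in lborel. g y = h y"
  shows "AE s in lborel. 0 < s \<longrightarrow> spherical_mean g s = spherical_mean h s"
proof -
  from assms(2) obtain Z where Z: "{y \<in> space lborel. g y \<noteq> h y} \<subseteq> Z" "emeasure lborel Z = 0"
    "Z \<in> sets lborel"
    by (rule AE_E)
  have [measurable]: "Z \<in> sets borel" "ball (0::'a) 1 \<in> sets borel"
    using Z(3) by simp_all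
  have off_Z: "g y = h y" if "y \<notin> Z" for y
    using Z(1) that by auto
  have "AE s in lborel. 0 < s \<longrightarrow> (AE x in lborel. x \<in> ball 0 1 \<longrightarrow> s *\<^sub>R (x /\<^sub>R norm x) \<notin> Z)"
    using Z(2) by (rule AE_radial_projection_notin_null[rotated]) simp
  then show ?thesis
  proof (rule eventually_mono, intro impI)
    fix s :: real
    assume "0 < s \<longrightarrow> (AE x in lborel. x \<in> ball 0 1 \<longrightarrow> s *\<^sub>R (x /\<^sub>R norm x) \<notin> Z)" "0 < s"
    then have ae: "AE x in lebesgue. indicator (ball 0 1) x *\<^sub>R h (s *\<^sub>R (x /\<^sub>R norm x)) =
        indicator (ball 0 1) x *\<^sub>R g (s *\<^sub>R (x /\<^sub>R norm x))"
      by (intro AE_completion) (auto simp: indicator_def off_Z elim!: eventually_mono)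
    have h_lebesgue: "(\<lambda>x. indicator (ball (0::'a) 1) x *\<^sub>R h (s *\<^sub>R (x /\<^sub>R norm x))) \<in> borel_measurable lebesgue"
      by (rule measurable_completion) measurable
    have "(\<integral>x. indicator (ball (0::'a) 1) x *\<^sub>R g (s *\<^sub>R (x /\<^sub>R norm x)) \<partial>lebesgue) =
        (\<integral>x. indicator (ball (0::'a) 1) x *\<^sub>R h (s *\<^sub>R (x /\<^sub>R norm x)) \<partial>lebesgue)"
    proof (rule integral_cong_AE)
      show "(\<lambda>x. indicator (ball (0::'a) 1) x *\<^sub>R g (s *\<^sub>R (x /\<^sub>R norm x))) \<in> borel_measurable lebesgue"
        by (rule borel_measurable_AE[OF h_lebesgue ae])
    qed (use h_lebesgue ae in \<open>auto elim: eventually_mono\<close>)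
    then show "spherical_mean g s = spherical_mean h s"
      by (simp add: spherical_mean_def set_lebesgue_integral_def)
  qed
qed

section \<open>Integrals over annuli\<close>

lemma nn_integral_inverse_interval:
  fixes a b :: real
  assumes "0 < a" "a \<le> b"
  shows "(\<integral>\<^sup>+s. indicator {a..} s * ennreal (indicator {..b} s / s) \<partial>lborel) = ennreal (ln (b / a))"
proof -
  have "((\<lambda>s. 1 / s) has_integral (ln b - ln a)) {a..b}"
  proof (rule fundamental_theorem_of_calculus)
    show "(ln has_vector_derivative 1 / s) (at s within {a..b})" if "s \<in> {a..b}" for s
      using that assms by (auto intro!: derivative_eq_intros simp: has_real_derivative_iff_has_vector_derivative[symmetric])
  qed fact
  then have "(\<integral>\<^sup>+s. ennreal (1 / s) * indicator {a..b} s \<partial>lborel) = ennreal (ln b - ln a)"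
    using assms by (intro nn_integral_has_integral_lebesgue') auto
  moreover have "indicator {a..} s * ennreal (indicator {..b} s / s) = ennreal (1 / s) * indicator {a..b} s" for s
    by (auto simp: indicator_def)
  ultimately show ?thesis
    using assms by (simp add: ln_div)
qed

lemma nn_integral_inverse_square_tail:
  fixes a :: real
  assumes "0 < a"
  shows "(\<integral>\<^sup>+s. indicator {a..} s * ennreal (1 / s / s) \<partial>lborel) = ennreal (1 / a)"
proof -
  have "AE s in lborel. indicator {a..} s * ennreal (1 / s / s) = indicator {a<..} s * ennreal (1 * s powr (- 1 - 1))"
    using AE_lborel_singleton[of a]
  proof eventually_elim
    case (elim s)
    then show ?case
      using assms by (cases "a < s") (auto simp: powr_minus powr_add[symmetric] powr_realpow power2_eq_square inverse_eq_divide)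
  qed
  then show ?thesis
    using nn_integral_powr_tail[of a 1] assms by (simp add: nn_integral_cong_AE powr_minus_divide)
qed

lemma nn_integral_inverse_power_shell:
  fixes a b :: real
  assumes "0 < a" "a \<le> b"
  shows "(\<integral>\<^sup>+y. indicator {a..} (norm (y::'a::euclidean_space)) * ennreal (indicator {..b} (norm y) / norm y ^ DIM('a)) \<partial>lborel) =
    ennreal (real DIM('a) * measure lborel (ball (0::'a) 1) * ln (b / a))"
  using nn_integral_radial_power[where \<psi> = "indicator {..b}" and 'a = 'a, OF _ _ \<open>0 < a\<close>]
    nn_integral_inverse_interval[OF assms] assms
  by (simp add: ennreal_mult)

lemma nn_integral_inverse_power_tail:
  fixes a :: real
  assumes "0 < a"
  shows "(\<integral>\<^sup>+y. indicator {a..} (norm (y::'a::euclidean_space)) * ennreal (1 / norm y ^ Suc DIM('a)) \<partial>lborel) =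
    ennreal (real DIM('a) * measure lborel (ball (0::'a) 1) / a)"
proof -
  have "(\<integral>\<^sup>+y. indicator {a..} (norm (y::'a)) * ennreal (1 / norm y ^ Suc DIM('a)) \<partial>lborel) =
      (\<integral>\<^sup>+y. indicator {a..} (norm (y::'a)) * ennreal (1 / norm y / norm y ^ DIM('a)) \<partial>lborel)"
    by (simp add: field_simps)
  also have "\<dots> = ennreal (real DIM('a) * measure lborel (ball (0::'a) 1)) *
      (\<integral>\<^sup>+s. indicator {a..} s * ennreal (1 / s / s) \<partial>lborel)"
    using assms by (intro nn_integral_radial_power) auto
  also have "\<dots> = ennreal (real DIM('a) * measure lborel (ball (0::'a) 1)) * ennreal (1 / a)"
    by (simp only: nn_integral_inverse_square_tail[OF assms])
  finally show ?thesis
    using ennreal_mult[of "real DIM('a) * measure lborel (ball (0::'a) 1)" "1 / a"] assms by simp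
qed

lemma integrable_annulus_weight:
  fixes \<phi> :: "real \<Rightarrow> real"
  assumes [measurable]: "\<phi> \<in> borel_measurable borel" and \<phi>: "\<And>s. \<bar>\<phi> s\<bar> \<le> C" and "0 < r"
  shows "integrable lborel (\<lambda>s. indicator {r..<R} s * \<phi> s / s)"
proof -
  have "emeasure lborel {r..<R} < \<infinity>"
    by (cases "r \<le> R") auto
  moreover have "norm (indicator {r..<R} s * \<phi> s / s) \<le> C / r" if "s \<in> {r..<R}" for s
    using that \<phi>[of s] \<open>0 < r\<close> order_trans[OF abs_ge_zero \<phi>] by (auto intro!: frac_le)
  ultimately show ?thesis
    by (intro integrableI_bounded_set[where A = "{r..<R}" and B = "C / r"]) auto
qed

lemma nn_integral_ball_radial_projection:
  fixes h :: "'a::euclidean_space \<Rightarrow> real"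
  assumes [measurable]: "h \<in> borel_measurable borel" and h: "\<And>y. 0 \<le> h y" "\<And>y. h y \<le> C"
  shows "(\<integral>\<^sup>+x. indicator (ball 0 1) x * ennreal (h (s *\<^sub>R (x /\<^sub>R norm x))) \<partial>lborel) =
    ennreal (measure lborel (ball (0::'a) 1) * spherical_mean h s)"
proof -
  have "(\<integral>\<^sup>+x. indicator (ball 0 1) x * ennreal (h (s *\<^sub>R (x /\<^sub>R norm x))) \<partial>lborel) =
      (\<integral>\<^sup>+x. ennreal (indicator (ball (0::'a) 1) x * h (s *\<^sub>R (x /\<^sub>R norm x))) \<partial>lborel)"
    by (intro nn_integral_cong) (simp add: indicator_def)
  also have "\<dots> = ennreal (\<integral>x. indicator (ball (0::'a) 1) x * h (s *\<^sub>R (x /\<^sub>R norm x)) \<partial>lborel)"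
    using h by (intro nn_integral_eq_integral integrable_ball_radial_projection[of h C]) auto
  finally show ?thesis
    using content_ball_pos[of 1 "0::'a"] by (simp add: spherical_mean_lborel)
qed

lemma has_bochner_integral_annulus_nonneg:
  fixes h :: "'a::euclidean_space \<Rightarrow> real"
  assumes [measurable]: "h \<in> borel_measurable borel"
    and h: "\<And>y. 0 \<le> h y" "\<And>y. h y \<le> C" and "0 < r"
  shows "has_bochner_integral lborel (\<lambda>y. indicator (ball 0 R - ball 0 r) y * h y / norm y ^ DIM('a))
    (real DIM('a) * measure lborel (ball (0::'a) 1) *
      (\<integral>s. indicator {r..<R} s * spherical_mean h s / s \<partial>lborel))"
proof -
  define n where "n = DIM('a)"
  define V where "V = measure lborel (ball (0::'a) 1)"
  define q where "q s = indicator {r..<R} s * spherical_mean h s / s" for s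
  have [measurable]: "ball (0::'a) c \<in> sets borel" for c
    by simp
  have q: "integrable lborel q"
    unfolding q_def using h \<open>0 < r\<close>
    by (intro integrable_annulus_weight[OF _ abs_spherical_mean_le[of h C]]) auto
  have q_nonneg: "0 \<le> q s" for s
    using spherical_mean_nonneg[of h s] h \<open>0 < r\<close> by (auto simp: q_def indicator_def)
  have radial_factor: "ennreal (indicator (ball 0 R - ball 0 r) y * h y / norm y ^ n) =
      ennreal (indicator {r..<R} (norm y) / norm y ^ n) * ennreal (h y)" for y :: 'a
    using h(1)[of y] by (auto simp: indicator_def ennreal_mult[symmetric])
  have shell: "indicator {0<..} s * ennreal (real n * s ^ (n - 1)) * ennreal (indicator {r..<R} s / s ^ n) *
      ennreal (V * spherical_mean h s) = ennreal (real n * V * q s)" for s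
  proof (cases "0 < s")
    case True
    have "s ^ n = s * s ^ (n - 1)"
      using power_minus_mult[of n s] by (simp add: n_def mult.commute)
    then have "real n * s ^ (n - 1) * (indicator {r..<R} s / s ^ n) * (V * spherical_mean h s) = real n * V * q s"
      using True by (simp add: q_def field_simps)
    moreover have "ennreal (real n * s ^ (n - 1) * (indicator {r..<R} s / s ^ n) * (V * spherical_mean h s)) =
        ennreal (real n * s ^ (n - 1)) * ennreal (indicator {r..<R} s / s ^ n) * ennreal (V * spherical_mean h s)"
    proof -
      have "0 \<le> real n * s ^ (n - 1)" "0 \<le> indicator {r..<R} s / s ^ n" "0 \<le> V * spherical_mean h s"
        using True spherical_mean_nonneg[of h s] h(1) by (simp_all add: V_def)
      then show ?thesis
        by (simp only: ennreal_mult mult_nonneg_nonneg)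
    qed
    ultimately show ?thesis
      using True by simp
  qed (use \<open>0 < r\<close> in \<open>simp add: q_def\<close>)
  have "(\<integral>\<^sup>+y. ennreal (indicator (ball 0 R - ball 0 r) y * h y / norm y ^ n) \<partial>lborel) =
      (\<integral>\<^sup>+s. indicator {0<..} s * ennreal (real n * s ^ (n - 1)) * ennreal (indicator {r..<R} s / s ^ n) *
        (\<integral>\<^sup>+x. indicator (ball 0 1) x * ennreal (h (s *\<^sub>R (x /\<^sub>R norm x))) \<partial>lborel) \<partial>lborel)"
    unfolding radial_factor unfolding n_def by (rule nn_integral_polar_radial_factor) measurable
  also have "\<dots> = (\<integral>\<^sup>+s. ennreal (real n * V * q s) \<partial>lborel)"
    by (simp only: nn_integral_ball_radial_projection[OF assms(1) h] V_def[symmetric] shell)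
  also have "\<dots> = ennreal (real n * V * (\<integral>s. q s \<partial>lborel))"
    using q q_nonneg by (subst nn_integral_eq_integral) (auto simp: V_def)
  finally show ?thesis
    unfolding n_def V_def q_def using q_nonneg h
    by (intro has_bochner_integral_nn_integral) (auto simp: q_def indicator_def)
qed

lemma has_bochner_integral_annulus:
  fixes h :: "'a::euclidean_space \<Rightarrow> real"
  assumes [measurable]: "h \<in> borel_measurable borel" and h: "\<And>y. \<bar>h y\<bar> \<le> C" and "0 < r"
  shows "has_bochner_integral lborel (\<lambda>y. indicator (ball 0 R - ball 0 r) y * h y / norm y ^ DIM('a))
    (real DIM('a) * measure lborel (ball (0::'a) 1) *
      (\<integral>s. indicator {r..<R} s * spherical_mean h s / s \<partial>lborel))"
proof -
  define NV where "NV = real DIM('a) * measure lborel (ball (0::'a) 1)"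
  define hp where "hp y = max (h y) 0" for y
  define hn where "hn y = max (- h y) 0" for y
  have [measurable]: "hp \<in> borel_measurable borel" "hn \<in> borel_measurable borel"
    unfolding hp_def hn_def by measurable
  have parts: "0 \<le> hp y" "hp y \<le> C" "\<bar>hp y\<bar> \<le> C" "0 \<le> hn y" "hn y \<le> C" "\<bar>hn y\<bar> \<le> C" for y
    using h[of y] by (auto simp: hp_def hn_def)
  have h_split: "h = (\<lambda>y. hp y - hn y)"
    by (auto simp: hp_def hn_def)
  have weight: "integrable lborel (\<lambda>s. indicator {r..<R} s * spherical_mean g s / s)"
    if [measurable]: "g \<in> borel_measurable borel" and "\<And>y. \<bar>g y\<bar> \<le> C" for g :: "'a \<Rightarrow> real"
    by (rule integrable_annulus_weight[OF _ abs_spherical_mean_le[OF that]]) (use \<open>0 < r\<close> in auto)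
  have "has_bochner_integral lborel
      (\<lambda>y. indicator (ball 0 R - ball 0 r) y * hp y / norm y ^ DIM('a) -
        indicator (ball 0 R - ball 0 r) y * hn y / norm y ^ DIM('a))
      (NV * (\<integral>s. indicator {r..<R} s * spherical_mean hp s / s \<partial>lborel) -
        NV * (\<integral>s. indicator {r..<R} s * spherical_mean hn s / s \<partial>lborel))"
    unfolding NV_def using parts \<open>0 < r\<close>
    by (intro has_bochner_integral_diff has_bochner_integral_annulus_nonneg) auto
  moreover have "(\<integral>s. indicator {r..<R} s * spherical_mean h s / s \<partial>lborel) =
      (\<integral>s. indicator {r..<R} s * spherical_mean hp s / s -
        indicator {r..<R} s * spherical_mean hn s / s \<partial>lborel)"
    using parts spherical_mean_diff[of hp hn C]
    by (simp add: h_split right_diff_distrib diff_divide_distrib)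
  moreover have "\<dots> = (\<integral>s. indicator {r..<R} s * spherical_mean hp s / s \<partial>lborel) -
      (\<integral>s. indicator {r..<R} s * spherical_mean hn s / s \<partial>lborel)"
    using parts by (intro Bochner_Integration.integral_diff weight) auto
  ultimately show ?thesis
    unfolding NV_def by (simp add: h_split right_diff_distrib[symmetric] diff_divide_distrib[symmetric])
qed

lemma abs_integral_annulus_le:
  fixes h :: "'a::euclidean_space \<Rightarrow> real"
  assumes [measurable]: "h \<in> borel_measurable borel" and h: "\<And>y. \<bar>h y\<bar> \<le> C" and "0 < r"
    and tail: "(\<integral>\<^sup>+s\<in>{r..}. ennreal (\<bar>spherical_mean h s\<bar> / s) \<partial>lborel) < \<infinity>"
  shows "\<bar>\<integral>y. indicator (ball 0 R - ball 0 r) y * h y / norm y ^ DIM('a) \<partial>lborel\<bar> \<le>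
    real DIM('a) * measure lborel (ball (0::'a) 1) *
      enn2real (\<integral>\<^sup>+s\<in>{r..}. ennreal (\<bar>spherical_mean h s\<bar> / s) \<partial>lborel)"
proof -
  define T where "T = (\<integral>\<^sup>+s\<in>{r..}. ennreal (\<bar>spherical_mean h s\<bar> / s) \<partial>lborel)"
  have "(\<integral>\<^sup>+s. ennreal \<bar>indicator {r..<R} s * spherical_mean h s / s\<bar> \<partial>lborel) \<le> T"
    unfolding T_def using \<open>0 < r\<close>
    by (intro nn_integral_mono) (auto simp: indicator_def abs_mult)
  then have "\<bar>\<integral>s. indicator {r..<R} s * spherical_mean h s / s \<partial>lborel\<bar> \<le> enn2real T"
    using tail by (intro abs_integral_le_if_nn_integral_le) (auto simp: T_def)
  then show ?thesis
    using has_bochner_integral_integral_eq[OF has_bochner_integral_annulus[OF assms(1,2,3)]]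
    by (simp add: T_def abs_mult mult_left_mono)
qed

section \<open>The truncated potential\<close>

lemma abs_inverse_power_diff_le:
  fixes a b d :: real
  assumes "0 < d" "d \<le> a" "d \<le> b"
  shows "\<bar>1 / a ^ n - 1 / b ^ n\<bar> \<le> real n * \<bar>a - b\<bar> / d ^ Suc n"
proof -
  have ordered: "\<bar>1 / a ^ n - 1 / b ^ n\<bar> \<le> real n * (b - a) / d ^ Suc n" if "d \<le> a" "a \<le> b" for a b
  proof -
    have "0 < a"
      using \<open>0 < d\<close> that by linarith
    have "b ^ k - a ^ k \<le> real k * b ^ (k - 1) * (b - a)" for k
    proof (induction k)
      case (Suc k)
      have "b ^ Suc k - a ^ Suc k = b * (b ^ k - a ^ k) + a ^ k * (b - a)"
        by (simp add: algebra_simps)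
      also have "\<dots> \<le> b * (real k * b ^ (k - 1) * (b - a)) + b ^ k * (b - a)"
        using \<open>0 < a\<close> that Suc by (intro add_mono mult_left_mono mult_right_mono power_mono) auto
      also have "\<dots> = real (Suc k) * b ^ (Suc k - 1) * (b - a)"
        by (cases k) (simp_all add: algebra_simps)
      finally show ?case .
    qed simp
    then have "(b ^ n - a ^ n) / (a ^ n * b ^ n) \<le> real n * b ^ (n - 1) * (b - a) / (a ^ n * b ^ n)"
      using \<open>0 < a\<close> that by (intro divide_right_mono) auto
    also have "\<dots> \<le> real n * (b - a) / a ^ Suc n"
    proof (cases n)
      case (Suc m)
      have "real n * b ^ m * (b - a) / (a ^ n * (b * b ^ m)) = real n * (b - a) / (a ^ n * b)"
        using \<open>0 < a\<close> that by (simp add: field_simps)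
      also have "\<dots> \<le> real n * (b - a) / (a ^ n * a)"
        using \<open>0 < a\<close> that by (intro divide_left_mono mult_left_mono mult_pos_pos) auto
      finally show ?thesis
        using Suc by (simp add: mult.commute)
    qed simp
    also have "\<dots> \<le> real n * (b - a) / d ^ Suc n"
      using \<open>0 < d\<close> that by (intro divide_left_mono power_mono mult_nonneg_nonneg) auto
    finally show ?thesis
      using \<open>0 < a\<close> that by (simp add: field_simps power_mono)
  qed
  show ?thesis
  proof (cases "a \<le> b")
    case True
    then show ?thesis
      using ordered[of a b] assms by simp
  next
    case False
    then show ?thesis
      using ordered[of b a] assms by (simp add: abs_minus_commute)
  qed
qed

definition truncated_potential :: "'a::euclidean_space set \<Rightarrow> ('a \<Rightarrow> real) \<Rightarrow> real \<Rightarrow> 'a \<Rightarrow> real" where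
  "truncated_potential \<Omega> h r x = (\<integral>y. indicator (ball 0 r - \<Omega>) y * h y / norm (x - y) ^ DIM('a) \<partial>lborel)"

lemma integrable_truncated_kernel:
  fixes h :: "'a::euclidean_space \<Rightarrow> real"
  assumes [measurable]: "\<Omega> \<in> sets borel" "h \<in> borel_measurable borel" and h: "\<And>y. \<bar>h y\<bar> \<le> C"
    and "0 < d" and far: "\<And>y. y \<notin> \<Omega> \<Longrightarrow> d \<le> norm (x - y)"
  shows "integrable lborel (\<lambda>y. indicator (ball 0 r - \<Omega>) y * h y / norm (x - y) ^ DIM('a))"
proof -
  have [measurable]: "ball (0::'a) r \<in> sets borel"
    by simp
  have "norm (indicator (ball 0 r - \<Omega>) y * h y / norm (x - y) ^ DIM('a)) \<le> C / d ^ DIM('a)" for y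
  proof (cases "y \<in> \<Omega>")
    case False
    then show ?thesis
      using h[of y] far[of y] \<open>0 < d\<close> order_trans[OF abs_ge_zero h]
      by (auto simp: indicator_def abs_mult intro!: frac_le power_mono)
  qed (use order_trans[OF abs_ge_zero h] \<open>0 < d\<close> in simp)
  then show ?thesis
    using emeasure_lborel_ball_finite[of "0::'a" r]
    by (intro integrableI_bounded_set[where A = "ball 0 r" and B = "C / d ^ DIM('a)"]) auto
qed

lemma truncated_potential_lipschitz:
  fixes h :: "'a::euclidean_space \<Rightarrow> real"
  assumes [measurable]: "\<Omega> \<in> sets borel" "h \<in> borel_measurable borel" and h: "\<And>y. \<bar>h y\<bar> \<le> C"
    and "0 < d" and far: "\<And>y. y \<notin> \<Omega> \<Longrightarrow> d \<le> norm (x - y)" "\<And>y. y \<notin> \<Omega> \<Longrightarrow> d \<le> norm (x' - y)"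
  shows "\<bar>truncated_potential \<Omega> h r x - truncated_potential \<Omega> h r x'\<bar> \<le>
    C * measure lborel (ball (0::'a) r) * real DIM('a) / d ^ Suc DIM('a) * dist x x'"
proof -
  define K where "K = C * real DIM('a) / d ^ Suc DIM('a) * dist x x'"
  have C: "0 \<le> C"
    using order_trans[OF abs_ge_zero h] .
  then have K: "0 \<le> K"
    using \<open>0 < d\<close> by (simp add: K_def)
  have kernel: "\<bar>indicator (ball 0 r - \<Omega>) y * h y / norm (x - y) ^ DIM('a) -
      indicator (ball 0 r - \<Omega>) y * h y / norm (x' - y) ^ DIM('a)\<bar> \<le> K * indicator (ball 0 r) y" for y
  proof (cases "y \<in> ball 0 r - \<Omega>")
    case True
    have "\<bar>norm (x - y) - norm (x' - y)\<bar> \<le> dist x x'"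
      using norm_triangle_ineq3[of "x - y" "x' - y"] by (simp add: dist_norm)
    have "\<bar>1 / norm (x - y) ^ DIM('a) - 1 / norm (x' - y) ^ DIM('a)\<bar> \<le>
        real DIM('a) * \<bar>norm (x - y) - norm (x' - y)\<bar> / d ^ Suc DIM('a)"
      using True far \<open>0 < d\<close> by (intro abs_inverse_power_diff_le) auto
    also have "\<dots> \<le> real DIM('a) * dist x x' / d ^ Suc DIM('a)"
      using \<open>\<bar>norm (x - y) - norm (x' - y)\<bar> \<le> dist x x'\<close> \<open>0 < d\<close>
      by (intro divide_right_mono mult_left_mono) auto
    finally have "\<bar>1 / norm (x - y) ^ DIM('a) - 1 / norm (x' - y) ^ DIM('a)\<bar> \<le>
        real DIM('a) * dist x x' / d ^ Suc DIM('a)" .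
    then have "\<bar>h y\<bar> * \<bar>1 / norm (x - y) ^ DIM('a) - 1 / norm (x' - y) ^ DIM('a)\<bar> \<le>
        C * (real DIM('a) * dist x x' / d ^ Suc DIM('a))"
      using h[of y] C by (intro mult_mono) auto
    moreover have "\<bar>indicator (ball 0 r - \<Omega>) y * h y / norm (x - y) ^ DIM('a) -
        indicator (ball 0 r - \<Omega>) y * h y / norm (x' - y) ^ DIM('a)\<bar> =
        \<bar>h y\<bar> * \<bar>1 / norm (x - y) ^ DIM('a) - 1 / norm (x' - y) ^ DIM('a)\<bar>"
      using True by (simp add: abs_mult[symmetric] right_diff_distrib)
    ultimately show ?thesis
      using True by (simp add: K_def)
  qed (use C \<open>0 < d\<close> in \<open>simp add: K_def\<close>)
  have "\<bar>\<integral>y. indicator (ball 0 r - \<Omega>) y * h y / norm (x - y) ^ DIM('a) -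
      indicator (ball 0 r - \<Omega>) y * h y / norm (x' - y) ^ DIM('a) \<partial>lborel\<bar> \<le> K * measure lborel (ball (0::'a) r)"
    using K emeasure_lborel_ball_finite[of "0::'a" r]
    by (intro abs_integral_le_indicator_bound[OF kernel]) auto
  then show ?thesis
    unfolding truncated_potential_def K_def
    using integrable_truncated_kernel[OF assms(1-4) far(1)] integrable_truncated_kernel[OF assms(1-4) far(2)]
    by (simp add: mult_ac)
qed

lemma abs_truncated_potential_le:
  fixes h :: "'a::euclidean_space \<Rightarrow> real"
  assumes [measurable]: "\<Omega> \<in> sets borel" "h \<in> borel_measurable borel" and h: "\<And>y. \<bar>h y\<bar> \<le> C"
    and "0 < d" and far: "\<And>y. y \<notin> \<Omega> \<Longrightarrow> d \<le> norm (x - y)"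
  shows "\<bar>truncated_potential \<Omega> h r x\<bar> \<le>
    C * (real DIM('a) * measure lborel (ball (0::'a) 1) * ln (max (norm x + r) d / d))"
proof -
  define b where "b = max (norm x + r) d"
  define k where "k z = indicator {d..} (norm z) * ennreal (indicator {..b} (norm z) / norm z ^ DIM('a))"
    for z :: 'a
  have [measurable]: "k \<in> borel_measurable borel" "ball (0::'a) r \<in> sets borel"
    unfolding k_def by measurable
  have C: "0 \<le> C"
    using order_trans[OF abs_ge_zero h] .
  have kernel: "ennreal \<bar>indicator (ball 0 r - \<Omega>) y * h y / norm (x - y) ^ DIM('a)\<bar> \<le> ennreal C * k (x - y)"
    for y
  proof (cases "y \<in> ball 0 r - \<Omega>")
    case True
    have "norm (x - y) \<le> norm x + norm y"
      by (rule norm_triangle_ineq4)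
    then have "d \<le> norm (x - y)" "norm (x - y) \<le> b"
      using True far by (auto simp: b_def)
    then have "k (x - y) = ennreal (1 / norm (x - y) ^ DIM('a))"
      by (simp add: k_def)
    moreover have "\<bar>indicator (ball 0 r - \<Omega>) y * h y / norm (x - y) ^ DIM('a)\<bar> \<le> C * (1 / norm (x - y) ^ DIM('a))"
      using True h[of y] by (simp add: divide_right_mono)
    then have "ennreal \<bar>indicator (ball 0 r - \<Omega>) y * h y / norm (x - y) ^ DIM('a)\<bar> \<le>
        ennreal (C * (1 / norm (x - y) ^ DIM('a)))"
      by (rule ennreal_leI)
    moreover have "ennreal (C * (1 / norm (x - y) ^ DIM('a))) = ennreal C * ennreal (1 / norm (x - y) ^ DIM('a))"
      by (rule ennreal_mult) (use C in auto)
    ultimately show ?thesis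
      by simp
  qed simp
  have "(\<integral>\<^sup>+y. ennreal \<bar>indicator (ball 0 r - \<Omega>) y * h y / norm (x - y) ^ DIM('a)\<bar> \<partial>lborel) \<le>
      (\<integral>\<^sup>+y. ennreal C * k (x - y) \<partial>lborel)"
    by (rule nn_integral_mono) (rule kernel)
  also have "\<dots> = ennreal C * (\<integral>\<^sup>+z. k z \<partial>lborel)"
    by (simp add: nn_integral_cmult nn_integral_lborel_reflect)
  also have "(\<integral>\<^sup>+z. k z \<partial>lborel) = ennreal (real DIM('a) * measure lborel (ball (0::'a) 1) * ln (b / d))"
    unfolding k_def using \<open>0 < d\<close> by (intro nn_integral_inverse_power_shell) (auto simp: b_def)
  also have "ennreal C * \<dots> = ennreal (C * (real DIM('a) * measure lborel (ball (0::'a) 1) * ln (b / d)))"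
    using C \<open>0 < d\<close> by (intro ennreal_mult[symmetric]) (auto simp: b_def)
  finally show ?thesis
    unfolding truncated_potential_def b_def using C \<open>0 < d\<close>
    by (intro abs_integral_le_if_nn_integral_le) auto
qed

lemma truncated_potential_diff_eq_annulus:
  fixes h :: "'a::euclidean_space \<Rightarrow> real"
  assumes [measurable]: "\<Omega> \<in> sets borel" "h \<in> borel_measurable borel" and h: "\<And>y. \<bar>h y\<bar> \<le> C"
    and "0 < d" and far: "\<And>y. y \<notin> \<Omega> \<Longrightarrow> d \<le> norm (x - y)"
    and "\<Omega> \<subseteq> ball 0 r" "r \<le> R"
  shows "truncated_potential \<Omega> h R x - truncated_potential \<Omega> h r x =
    (\<integral>y. indicator (ball 0 R - ball 0 r) y * h y / norm (x - y) ^ DIM('a) \<partial>lborel)"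
proof -
  have "indicator (ball 0 R - \<Omega>) y * h y / norm (x - y) ^ DIM('a) -
      indicator (ball 0 r - \<Omega>) y * h y / norm (x - y) ^ DIM('a) =
      indicator (ball 0 R - ball 0 r) y * h y / norm (x - y) ^ DIM('a)" for y
    using \<open>\<Omega> \<subseteq> ball 0 r\<close> \<open>r \<le> R\<close> by (auto simp: indicator_def)
  then show ?thesis
    unfolding truncated_potential_def
    using integrable_truncated_kernel[OF assms(1-5)]
    by (simp flip: Bochner_Integration.integral_diff)
qed

lemma abs_inverse_power_shift_le:
  fixes x y :: "'a::real_normed_vector"
  assumes "norm x \<le> B" "2 * B \<le> norm y" "0 < norm y"
  shows "\<bar>1 / norm (x - y) ^ n - 1 / norm y ^ n\<bar> \<le> real n * B * 2 ^ Suc n / norm y ^ Suc n"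
proof -
  have "\<bar>norm (x - y) - norm y\<bar> \<le> B"
    using norm_triangle_ineq3[of "x - y" "- y"] assms(1) by simp
  then have "norm y / 2 \<le> norm (x - y)"
    using assms(2) by linarith
  then have "\<bar>1 / norm (x - y) ^ n - 1 / norm y ^ n\<bar> \<le> real n * \<bar>norm (x - y) - norm y\<bar> / (norm y / 2) ^ Suc n"
    using assms(3) by (intro abs_inverse_power_diff_le) auto
  also have "\<dots> \<le> real n * B / (norm y / 2) ^ Suc n"
    using \<open>\<bar>norm (x - y) - norm y\<bar> \<le> B\<close> assms(3) by (intro divide_right_mono mult_left_mono) auto
  also have "\<dots> = real n * B * 2 ^ Suc n / norm y ^ Suc n"
    by (simp add: power_divide)
  finally show ?thesis .
qed

lemma abs_integral_le_inverse_power_tail: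
  fixes f :: "'a::euclidean_space \<Rightarrow> real"
  assumes f: "\<And>y. \<bar>f y\<bar> \<le> K * (indicator {r..} (norm y) / norm y ^ Suc DIM('a))" and "0 \<le> K" "0 < r"
  shows "\<bar>\<integral>y. f y \<partial>lborel\<bar> \<le> K * (real DIM('a) * measure lborel (ball (0::'a) 1) / r)"
proof -
  have "(\<integral>\<^sup>+y. ennreal \<bar>f y\<bar> \<partial>lborel) \<le>
      (\<integral>\<^sup>+y. ennreal K * (indicator {r..} (norm (y::'a)) * ennreal (1 / norm y ^ Suc DIM('a))) \<partial>lborel)"
  proof (rule nn_integral_mono)
    fix y :: 'a
    have "ennreal \<bar>f y\<bar> \<le> ennreal (K * (indicator {r..} (norm y) * (1 / norm y ^ Suc DIM('a))))"
      using f[of y] by (intro ennreal_leI) simp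
    also have "\<dots> = ennreal K * ennreal (indicator {r..} (norm y) * (1 / norm y ^ Suc DIM('a)))"
      by (rule ennreal_mult') (rule \<open>0 \<le> K\<close>)
    also have "ennreal (indicator {r..} (norm y) * (1 / norm y ^ Suc DIM('a))) =
        indicator {r..} (norm y) * ennreal (1 / norm y ^ Suc DIM('a))"
      by (simp add: indicator_def)
    finally show "ennreal \<bar>f y\<bar> \<le> ennreal K * (indicator {r..} (norm y) * ennreal (1 / norm y ^ Suc DIM('a)))" .
  qed
  also have "\<dots> = ennreal K * (\<integral>\<^sup>+y. indicator {r..} (norm (y::'a)) * ennreal (1 / norm y ^ Suc DIM('a)) \<partial>lborel)"
    by (rule nn_integral_cmult) measurable
  also have "(\<integral>\<^sup>+y. indicator {r..} (norm (y::'a)) * ennreal (1 / norm y ^ Suc DIM('a)) \<partial>lborel) =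
      ennreal (real DIM('a) * measure lborel (ball (0::'a) 1) / r)"
    by (rule nn_integral_inverse_power_tail) (rule \<open>0 < r\<close>)
  also have "ennreal K * ennreal (real DIM('a) * measure lborel (ball (0::'a) 1) / r) =
      ennreal (K * (real DIM('a) * measure lborel (ball (0::'a) 1) / r))"
    using \<open>0 \<le> K\<close> \<open>0 < r\<close> by (intro ennreal_mult[symmetric]) auto
  finally show ?thesis
    using \<open>0 \<le> K\<close> \<open>0 < r\<close> by (intro abs_integral_le_if_nn_integral_le) auto
qed

lemma abs_annulus_kernel_shift_le:
  fixes h :: "'a::euclidean_space \<Rightarrow> real"
  assumes h: "\<And>y. \<bar>h y\<bar> \<le> C" and "norm x \<le> B" "0 < r" "2 * B \<le> r"
  shows "\<bar>\<integral>y. indicator (ball 0 R - ball 0 r) y * h y *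
      (1 / norm (x - y) ^ DIM('a) - 1 / norm y ^ DIM('a)) \<partial>lborel\<bar> \<le>
    C * real DIM('a) * B * 2 ^ Suc DIM('a) * (real DIM('a) * measure lborel (ball (0::'a) 1) / r)"
proof (rule abs_integral_le_inverse_power_tail)
  show "0 \<le> C * real DIM('a) * B * 2 ^ Suc DIM('a)"
    using order_trans[OF abs_ge_zero h] order_trans[OF norm_ge_zero \<open>norm x \<le> B\<close>] by simp
  fix y :: 'a
  show "\<bar>indicator (ball 0 R - ball 0 r) y * h y * (1 / norm (x - y) ^ DIM('a) - 1 / norm y ^ DIM('a))\<bar> \<le>
      C * real DIM('a) * B * 2 ^ Suc DIM('a) * (indicator {r..} (norm y) / norm y ^ Suc DIM('a))"
  proof (cases "y \<in> ball 0 R - ball 0 r")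
    case True
    then have "\<bar>1 / norm (x - y) ^ DIM('a) - 1 / norm y ^ DIM('a)\<bar> \<le>
        real DIM('a) * B * 2 ^ Suc DIM('a) / norm y ^ Suc DIM('a)"
      using \<open>norm x \<le> B\<close> \<open>0 < r\<close> \<open>2 * B \<le> r\<close> by (intro abs_inverse_power_shift_le) auto
    then have "\<bar>h y\<bar> * \<bar>1 / norm (x - y) ^ DIM('a) - 1 / norm y ^ DIM('a)\<bar> \<le>
        C * (real DIM('a) * B * 2 ^ Suc DIM('a) / norm y ^ Suc DIM('a))"
      using h[of y] order_trans[OF abs_ge_zero h] by (intro mult_mono) auto
    then show ?thesis
      using True by (simp add: abs_mult mult_ac)
  qed (use order_trans[OF abs_ge_zero h] order_trans[OF norm_ge_zero \<open>norm x \<le> B\<close>] in simp)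
qed (use \<open>0 < r\<close> in simp)

(* The annulus integral splits into the recentred kernel |y|^(-N), which only sees the
   spherical means of h, and the O(1/r) error of recentring. *)
lemma abs_truncated_potential_diff_le:
  fixes h :: "'a::euclidean_space \<Rightarrow> real"
  assumes [measurable]: "\<Omega> \<in> sets borel" "h \<in> borel_measurable borel" and h: "\<And>y. \<bar>h y\<bar> \<le> C"
    and "0 < d" and far: "\<And>y. y \<notin> \<Omega> \<Longrightarrow> d \<le> norm (x - y)"
    and "\<Omega> \<subseteq> ball 0 B" "norm x \<le> B" "0 < r" "2 * B \<le> r" "r \<le> R"
    and tail: "(\<integral>\<^sup>+s\<in>{r..}. ennreal (\<bar>spherical_mean h s\<bar> / s) \<partial>lborel) < \<infinity>"
  shows "\<bar>truncated_potential \<Omega> h R x - truncated_potential \<Omega> h r x\<bar> \<le>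
    C * real DIM('a) * B * 2 ^ Suc DIM('a) * (real DIM('a) * measure lborel (ball (0::'a) 1) / r) +
    real DIM('a) * measure lborel (ball (0::'a) 1) *
      enn2real (\<integral>\<^sup>+s\<in>{r..}. ennreal (\<bar>spherical_mean h s\<bar> / s) \<partial>lborel)"
proof -
  define A where "A = ball (0::'a) R - ball 0 r"
  have "\<Omega> \<subseteq> ball 0 r"
    using \<open>\<Omega> \<subseteq> ball 0 B\<close> \<open>2 * B \<le> r\<close> order_trans[OF norm_ge_zero \<open>norm x \<le> B\<close>] by auto
  have centred: "integrable lborel (\<lambda>y. indicator A y * h y / norm y ^ DIM('a))"
    unfolding A_def by (rule integrable.intros[OF has_bochner_integral_annulus[OF assms(2) h \<open>0 < r\<close>]])
  have "integrable lborel (\<lambda>y. indicator (ball 0 R - \<Omega>) y * h y / norm (x - y) ^ DIM('a) -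
      indicator (ball 0 r - \<Omega>) y * h y / norm (x - y) ^ DIM('a))"
    using integrable_truncated_kernel[OF assms(1-5)] by simp
  moreover have "indicator (ball 0 R - \<Omega>) y * h y / norm (x - y) ^ DIM('a) -
      indicator (ball 0 r - \<Omega>) y * h y / norm (x - y) ^ DIM('a) =
      indicator A y * h y / norm (x - y) ^ DIM('a)" for y
    using \<open>\<Omega> \<subseteq> ball 0 r\<close> \<open>r \<le> R\<close> by (auto simp: A_def indicator_def)
  ultimately have shifted: "integrable lborel (\<lambda>y. indicator A y * h y / norm (x - y) ^ DIM('a))"
    by simp
  have "truncated_potential \<Omega> h R x - truncated_potential \<Omega> h r x =
      (\<integral>y. indicator A y * h y / norm (x - y) ^ DIM('a) \<partial>lborel)"
    unfolding A_def by (rule truncated_potential_diff_eq_annulus[OF assms(1-5) \<open>\<Omega> \<subseteq> ball 0 r\<close> \<open>r \<le> R\<close>])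
  also have "\<dots> = (\<integral>y. indicator A y * h y / norm y ^ DIM('a) \<partial>lborel) +
      (\<integral>y. indicator A y * h y * (1 / norm (x - y) ^ DIM('a) - 1 / norm y ^ DIM('a)) \<partial>lborel)"
    using centred shifted by (simp add: right_diff_distrib)
  finally have "truncated_potential \<Omega> h R x - truncated_potential \<Omega> h r x =
      (\<integral>y. indicator A y * h y / norm y ^ DIM('a) \<partial>lborel) +
      (\<integral>y. indicator A y * h y * (1 / norm (x - y) ^ DIM('a) - 1 / norm y ^ DIM('a)) \<partial>lborel)" .
  then show ?thesis
    using abs_integral_annulus_le[OF assms(2) h \<open>0 < r\<close> tail, of R]
      abs_annulus_kernel_shift_le[where h = h and R = R, OF h \<open>norm x \<le> B\<close> \<open>0 < r\<close> \<open>2 * B \<le> r\<close>]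
    unfolding A_def by linarith
qed

section \<open>Boundary behaviour and the limit of large radii\<close>

lemma bdist_le_dist:
  assumes "x \<in> \<Omega>" "y \<notin> \<Omega>"
  shows "bdist \<Omega> x \<le> dist x y"
proof -
  obtain z where z: "z \<in> closed_segment x y" "z \<in> frontier \<Omega>"
    using connected_Int_frontier[of "closed_segment x y" \<Omega>] assms by auto
  have "bdist \<Omega> x \<le> dist x z"
    unfolding bdist_def by (rule infdist_le) (rule z(2))
  also have "\<dots> \<le> dist x y"
    using dist_in_closed_segment[OF z(1)] by (simp add: dist_commute)
  finally show ?thesis .
qed

lemma bdist_pos:
  assumes "open \<Omega>" "bounded \<Omega>" "x \<in> \<Omega>"
  shows "0 < bdist \<Omega> x"
proof -
  have "frontier \<Omega> \<noteq> {}"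
    using assms by (intro frontier_not_empty) auto
  moreover have "x \<notin> frontier \<Omega>"
    using assms by (simp add: frontier_def interior_open)
  ultimately show ?thesis
    unfolding bdist_def by (intro infdist_pos_not_in_closed) auto
qed

lemma bdist_le_of_subset_ball:
  fixes \<Omega> :: "'a::euclidean_space set"
  assumes "\<Omega> \<subseteq> ball 0 B" "x \<in> \<Omega>"
  shows "bdist \<Omega> x \<le> 2 * B"
proof -
  have "norm x < B"
    using assms by auto
  then have "0 \<le> B"
    using norm_ge_zero[of x] by linarith
  then obtain z :: 'a where "norm z = B"
    by (rule vector_choose_size)
  then have "bdist \<Omega> x \<le> dist x z"
    using assms by (intro bdist_le_dist) auto
  also have "\<dots> \<le> norm x + norm z"
    by (simp add: dist_norm norm_triangle_ineq4)
  finally show ?thesis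
    using \<open>norm x < B\<close> \<open>norm z = B\<close> by linarith
qed

lemma continuous_on_closure_extend_zero:
  fixes F :: "'a::euclidean_space \<Rightarrow> real"
  assumes "open \<Omega>" "continuous_on \<Omega> F" "0 < a" "0 \<le> K"
    and bound: "\<And>y. y \<in> \<Omega> \<Longrightarrow> \<bar>F y\<bar> \<le> K * bdist \<Omega> y powr a"
  shows "continuous_on (closure \<Omega>) (\<lambda>x. if x \<in> \<Omega> then F x else 0)"
  unfolding continuous_on_eq_continuous_within
proof
  fix x assume x: "x \<in> closure \<Omega>"
  define G where "G x = (if x \<in> \<Omega> then F x else 0)" for x
  show "continuous (at x within closure \<Omega>) G"
  proof (cases "x \<in> \<Omega>")
    case True
    have "isCont F x"
      using assms(1,2) True by (simp add: continuous_on_eq_continuous_at)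
    moreover have "\<forall>\<^sub>F y in nhds x. F y = G y"
      using eventually_nhds_in_open[OF assms(1) True] by eventually_elim (simp add: G_def)
    ultimately have "isCont G x"
      using isCont_cong by blast
    then show ?thesis
      by (rule continuous_at_imp_continuous_at_within)
  next
    case False
    then have "x \<in> frontier \<Omega>"
      using x assms(1) by (simp add: frontier_def interior_open)
    have G_le: "norm (G y) \<le> K * dist y x powr a" for y
    proof (cases "y \<in> \<Omega>")
      case True
      have "bdist \<Omega> y \<le> dist y x"
        unfolding bdist_def using \<open>x \<in> frontier \<Omega>\<close> by (rule infdist_le)
      then have "K * bdist \<Omega> y powr a \<le> K * dist y x powr a"
        using assms(3,4) by (intro mult_left_mono powr_mono2) (auto simp: bdist_def infdist_nonneg)
      then show ?thesis
        using bound[OF True] by (simp add: G_def True)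
    qed (use assms(4) in \<open>simp add: G_def\<close>)
    have "((\<lambda>y. dist y x powr a) \<longlongrightarrow> dist x x powr a) (at x within closure \<Omega>)"
      using assms(3) by (intro tendsto_powr' tendsto_dist tendsto_ident_at tendsto_const) auto
    then have lim: "((\<lambda>y. K * dist y x powr a) \<longlongrightarrow> 0) (at x within closure \<Omega>)"
      by (intro tendsto_mult_right_zero) simp
    have "(G \<longlongrightarrow> 0) (at x within closure \<Omega>)"
      by (intro Lim_null_comparison[OF _ lim] always_eventually allI) (rule G_le)
    then show ?thesis
      using False by (simp add: continuous_within G_def)
  qed
qed

lemma powr_mult_ln_le:
  fixes b d \<epsilon> :: real
  assumes "0 < d" "d \<le> b" "0 < \<epsilon>"
  shows "d powr \<epsilon> * ln (b / d) \<le> 2 / \<epsilon> * b powr (\<epsilon> / 2) * d powr (\<epsilon> / 2)"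
proof -
  have "ln (b / d) \<le> (b / d) powr (\<epsilon> / 2) / (\<epsilon> / 2)"
    using assms by (intro ln_powr_bound) auto
  then have "d powr \<epsilon> * ln (b / d) \<le> d powr \<epsilon> * ((b / d) powr (\<epsilon> / 2) / (\<epsilon> / 2))"
    by (rule mult_left_mono) simp
  also have "\<dots> = 2 / \<epsilon> * b powr (\<epsilon> / 2) * d powr (\<epsilon> / 2)"
    using assms by (simp add: powr_divide field_simps flip: powr_add)
  finally show ?thesis .
qed

lemma uniform_limit_at_top_if_Cauchy:
  fixes F :: "real \<Rightarrow> 'a \<Rightarrow> 'b::complete_space"
  assumes Cauchy: "\<And>e. 0 < e \<Longrightarrow> \<exists>M. \<forall>r R x. M \<le> r \<longrightarrow> M \<le> R \<longrightarrow> x \<in> S \<longrightarrow> dist (F r x) (F R x) < e"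
  shows "\<exists>L. uniform_limit S F L at_top"
proof -
  have "\<forall>e>0. \<exists>N. \<forall>m n x. N \<le> m \<and> N \<le> n \<and> x \<in> S \<longrightarrow> dist (F (real m) x) (F (real n) x) < e"
  proof (intro allI impI)
    fix e :: real
    assume "0 < e"
    then obtain M where "\<forall>r R x. M \<le> r \<longrightarrow> M \<le> R \<longrightarrow> x \<in> S \<longrightarrow> dist (F r x) (F R x) < e"
      using Cauchy by blast
    moreover obtain N :: nat where "M \<le> real N"
      using real_arch_simple by blast
    ultimately show "\<exists>N. \<forall>m n x. N \<le> m \<and> N \<le> n \<and> x \<in> S \<longrightarrow> dist (F (real m) x) (F (real n) x) < e"
      by (intro exI[of _ N]) (auto intro: order_trans)
  qed
  then obtain L where L: "\<forall>e>0. \<exists>N. \<forall>n x. N \<le> n \<and> x \<in> S \<longrightarrow> dist (F (real n) x) (L x) < e"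
    using uniformly_convergent_eq_cauchy[of "\<lambda>x. x \<in> S" "\<lambda>n. F (real n)"] by blast
  have "uniform_limit S F L at_top"
    unfolding uniform_limit_iff eventually_at_top_linorder
  proof (intro allI impI)
    fix e :: real
    assume "0 < e"
    then obtain M where M: "\<forall>r R x. M \<le> r \<longrightarrow> M \<le> R \<longrightarrow> x \<in> S \<longrightarrow> dist (F r x) (F R x) < e / 2"
      using Cauchy[of "e / 2"] by auto
    obtain N where N: "\<forall>n x. N \<le> n \<and> x \<in> S \<longrightarrow> dist (F (real n) x) (L x) < e / 2"
      using L \<open>0 < e\<close> by (meson half_gt_zero)
    obtain n :: nat where n: "N \<le> n" "M \<le> real n"
      using real_arch_simple[of M] by (metis le_cases of_nat_le_iff order.trans)
    have "dist (F r x) (L x) < e" if "M \<le> r" "x \<in> S" for r x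
    proof -
      have "dist (F r x) (L x) \<le> dist (F r x) (F (real n) x) + dist (F (real n) x) (L x)"
        by (rule dist_triangle)
      also have "\<dots> < e / 2 + e / 2"
        using M N n that by (intro add_strict_mono) auto
      finally show ?thesis
        by simp
    qed
    then show "\<exists>M. \<forall>r\<ge>M. \<forall>x\<in>S. dist (F r x) (L x) < e"
      by blast
  qed
  then show ?thesis
    by blast
qed

lemma uniform_limit_at_top_if_dist_le:
  fixes F :: "real \<Rightarrow> 'a \<Rightarrow> 'b::complete_space"
  assumes "(\<beta> \<longlongrightarrow> 0) at_top"
    and bound: "\<And>r R x. M \<le> r \<Longrightarrow> r \<le> R \<Longrightarrow> x \<in> S \<Longrightarrow> dist (F R x) (F r x) \<le> \<beta> r"
  shows "\<exists>L. uniform_limit S F L at_top"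
proof (rule uniform_limit_at_top_if_Cauchy)
  fix e :: real
  assume "0 < e"
  then obtain M' where M': "\<And>r. M' \<le> r \<Longrightarrow> \<beta> r < e"
    using order_tendstoD(2)[OF assms(1)] by (fastforce simp: eventually_at_top_linorder)
  have "dist (F r x) (F R x) < e" if "max M M' \<le> r" "max M M' \<le> R" "x \<in> S" for r R x
  proof (cases "r \<le> R")
    case True
    then show ?thesis
      using bound[of r R x] M'[of r] that by (simp add: dist_commute)
  next
    case False
    then show ?thesis
      using bound[of R r x] M'[of R] that by simp
  qed
  then show "\<exists>M. \<forall>r R x. M \<le> r \<longrightarrow> M \<le> R \<longrightarrow> x \<in> S \<longrightarrow> dist (F r x) (F R x) < e"
    by blast
qed

lemma tendsto_nn_integral_tail:
  fixes \<Phi> :: "real \<Rightarrow> ennreal"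
  assumes [measurable]: "\<Phi> \<in> borel_measurable borel" and finite: "(\<integral>\<^sup>+s\<in>{a..}. \<Phi> s \<partial>lborel) < \<infinity>"
  shows "((\<lambda>r. \<integral>\<^sup>+s\<in>{r..}. \<Phi> s \<partial>lborel) \<longlongrightarrow> 0) at_top"
proof (rule order_tendstoI)
  fix e :: ennreal
  assume "0 < e"
  define f where "f n s = \<Phi> s * indicator {a + real n..} s" for n :: nat and s :: real
  have dec: "decseq f"
    unfolding f_def by (intro decseq_SucI le_funI mult_left_mono) (auto simp: indicator_def)
  have zero: "(INF n. f n s) = 0" for s
  proof -
    obtain n :: nat where "s - a < real n"
      using reals_Archimedean2 by blast
    then have "f n s = 0"
      by (simp add: f_def)
    then show ?thesis
      by (metis INF_lower2 UNIV_I le_zero_eq order_refl)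
  qed
  have meas: "f n \<in> borel_measurable lborel" for n
    unfolding f_def by measurable
  have "(\<integral>\<^sup>+s. f 0 s \<partial>lborel) < \<infinity>"
    unfolding f_def of_nat_0 add_0_right by (rule finite)
  then have "(\<integral>\<^sup>+s. (INF n. f n s) \<partial>lborel) = (INF n. integral\<^sup>N lborel (f n))"
    by (rule nn_integral_monotone_convergence_INF_decseq[OF dec meas])
  then have "(INF n. integral\<^sup>N lborel (f n)) = 0"
    using zero by simp
  then have "(INF n. integral\<^sup>N lborel (f n)) < e"
    using \<open>0 < e\<close> by simp
  then obtain n where n: "integral\<^sup>N lborel (f n) < e"
    by (auto simp: INF_less_iff)
  have tail_le: "(\<integral>\<^sup>+s\<in>{r..}. \<Phi> s \<partial>lborel) \<le> integral\<^sup>N lborel (f n)" if "a + real n \<le> r" for r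
    unfolding f_def using that by (intro nn_integral_mono mult_left_mono) (auto simp: indicator_def)
  show "\<forall>\<^sub>F r in at_top. (\<integral>\<^sup>+s\<in>{r..}. \<Phi> s \<partial>lborel) < e"
    unfolding eventually_at_top_linorder
  proof (intro exI allI impI)
    fix r
    assume "a + real n \<le> r"
    show "(\<integral>\<^sup>+s\<in>{r..}. \<Phi> s \<partial>lborel) < e"
      using tail_le[OF \<open>a + real n \<le> r\<close>] n by (rule le_less_trans)
  qed
qed simp

lemma continuous_on_truncated_potential:
  fixes h :: "'a::euclidean_space \<Rightarrow> real"
  assumes "open \<Omega>" "bounded \<Omega>" "h \<in> borel_measurable borel" "\<And>y. \<bar>h y\<bar> \<le> C"
  shows "continuous_on \<Omega> (truncated_potential \<Omega> h r)"
proof (rule continuous_at_imp_continuous_on, rule ballI)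
  fix x0
  assume "x0 \<in> \<Omega>"
  define d where "d = bdist \<Omega> x0 / 2"
  define L where "L = C * measure lborel (ball (0::'a) r) * real DIM('a) / d ^ Suc DIM('a)"
  have "0 < d"
    using bdist_pos[OF assms(1,2) \<open>x0 \<in> \<Omega>\<close>] by (simp add: d_def)
  have far: "d \<le> norm (x - y)" if "x \<in> ball x0 d" "y \<notin> \<Omega>" for x y
  proof -
    have "2 * d \<le> dist x0 y"
      using bdist_le_dist[OF \<open>x0 \<in> \<Omega>\<close> \<open>y \<notin> \<Omega>\<close>] by (simp add: d_def)
    also have "\<dots> \<le> dist x0 x + norm (x - y)"
      by (metis dist_norm dist_triangle)
    finally show ?thesis
      using that by simp
  qed
  have "L-lipschitz_on (ball x0 d) (truncated_potential \<Omega> h r)"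
  proof (rule lipschitz_onI)
    fix x x'
    assume "x \<in> ball x0 d" "x' \<in> ball x0 d"
    then show "dist (truncated_potential \<Omega> h r x) (truncated_potential \<Omega> h r x') \<le> L * dist x x'"
      using assms(1,3,4) \<open>0 < d\<close> far
      unfolding L_def dist_real_def by (intro truncated_potential_lipschitz) auto
  next
    show "0 \<le> L"
      using order_trans[OF abs_ge_zero assms(4)] \<open>0 < d\<close> by (simp add: L_def)
  qed
  then have "continuous_on (ball x0 d) (truncated_potential \<Omega> h r)"
    by (rule lipschitz_on_continuous_on)
  then show "isCont (truncated_potential \<Omega> h r) x0"
    using \<open>0 < d\<close> by (intro continuous_on_interior) auto
qed

lemma continuous_on_weighted_truncated_potential:
  fixes h :: "'a::euclidean_space \<Rightarrow> real"
  assumes "open \<Omega>" "bounded \<Omega>" "h \<in> borel_measurable borel" "\<And>y. \<bar>h y\<bar> \<le> C"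
  shows "continuous_on \<Omega> (\<lambda>x. bdist \<Omega> x powr \<epsilon> * truncated_potential \<Omega> h r x)"
proof (intro continuous_on_mult continuous_on_truncated_potential[OF assms] continuous_on_powr)
  show "continuous_on \<Omega> (bdist \<Omega>)"
    unfolding bdist_def by (intro continuous_intros)
next
  show "continuous_on \<Omega> (\<lambda>x. \<epsilon>)"
    by (rule continuous_on_const)
next
  show "\<forall>x\<in>\<Omega>. bdist \<Omega> x \<noteq> 0"
    using bdist_pos[OF assms(1,2)] by (metis order_less_irrefl)
qed

lemma abs_weighted_truncated_potential_le:
  fixes h :: "'a::euclidean_space \<Rightarrow> real"
  assumes "open \<Omega>" "bounded \<Omega>" and [measurable]: "h \<in> borel_measurable borel"
    and h: "\<And>y. \<bar>h y\<bar> \<le> C" and "0 < \<epsilon>"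
  obtains K where "0 \<le> K"
    "\<And>y. y \<in> \<Omega> \<Longrightarrow> \<bar>bdist \<Omega> y powr \<epsilon> * truncated_potential \<Omega> h r y\<bar> \<le> K * bdist \<Omega> y powr (\<epsilon> / 2)"
proof -
  obtain B where "0 < B" "\<Omega> \<subseteq> ball 0 B"
    using bounded_subset_ballD[OF assms(2), of 0] by blast
  define b where "b = 3 * B + \<bar>r\<bar> + 1"
  define NV where "NV = real DIM('a) * measure lborel (ball (0::'a) 1)"
  have [measurable]: "\<Omega> \<in> sets borel"
    using assms(1) by simp
  have C: "0 \<le> C"
    using order_trans[OF abs_ge_zero h] .
  have "\<bar>bdist \<Omega> y powr \<epsilon> * truncated_potential \<Omega> h r y\<bar> \<le>
      C * NV * (2 / \<epsilon> * b powr (\<epsilon> / 2)) * bdist \<Omega> y powr (\<epsilon> / 2)" if "y \<in> \<Omega>" for y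
  proof -
    define d where "d = bdist \<Omega> y"
    have "0 < d"
      using bdist_pos[OF assms(1,2) that] by (simp add: d_def)
    have "d \<le> 2 * B" "norm y < B"
      using bdist_le_of_subset_ball[OF \<open>\<Omega> \<subseteq> ball 0 B\<close> that] that \<open>\<Omega> \<subseteq> ball 0 B\<close> by (auto simp: d_def)
    then have "max (norm y + r) d \<le> b" "d \<le> b"
      using \<open>0 < B\<close> abs_ge_self[of r] abs_ge_zero[of r] by (auto simp: b_def)
    have "\<bar>truncated_potential \<Omega> h r y\<bar> \<le> C * (NV * ln (max (norm y + r) d / d))"
      unfolding NV_def using \<open>0 < d\<close> bdist_le_dist[OF that]
      by (intro abs_truncated_potential_le[OF _ _ h]) (auto simp: d_def dist_norm)
    also have "\<dots> \<le> C * (NV * ln (b / d))"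
    proof -
      have "max (norm y + r) d / d \<le> b / d"
        using \<open>0 < d\<close> \<open>max (norm y + r) d \<le> b\<close> by (intro divide_right_mono) auto
      moreover have "0 < max (norm y + r) d / d"
        using \<open>0 < d\<close> by simp
      ultimately show ?thesis
        using C by (intro mult_left_mono ln_mono) (auto simp: NV_def)
    qed
    finally have "\<bar>bdist \<Omega> y powr \<epsilon> * truncated_potential \<Omega> h r y\<bar> \<le> d powr \<epsilon> * (C * (NV * ln (b / d)))"
      by (simp add: d_def abs_mult mult_left_mono)
    also have "\<dots> = C * NV * (d powr \<epsilon> * ln (b / d))"
      by (simp add: mult_ac)
    also have "\<dots> \<le> C * NV * (2 / \<epsilon> * b powr (\<epsilon> / 2) * d powr (\<epsilon> / 2))"
      using C \<open>0 < d\<close> \<open>d \<le> b\<close> \<open>0 < \<epsilon>\<close> by (intro mult_left_mono powr_mult_ln_le) (auto simp: NV_def)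
    finally show ?thesis
      by (simp add: d_def mult_ac)
  qed
  moreover have "0 \<le> C * NV * (2 / \<epsilon> * b powr (\<epsilon> / 2))"
    using C \<open>0 < \<epsilon>\<close> by (simp add: NV_def)
  ultimately show ?thesis
    using that by blast
qed

lemma weighted_truncated_potential_extends:
  fixes h :: "'a::euclidean_space \<Rightarrow> real"
  assumes "open \<Omega>" "bounded \<Omega>" "h \<in> borel_measurable borel" "\<And>y. \<bar>h y\<bar> \<le> C" "0 < \<epsilon>"
  shows "\<exists>G. continuous_on (closure \<Omega>) G \<and>
    (\<forall>x\<in>\<Omega>. G x = bdist \<Omega> x powr \<epsilon> * truncated_potential \<Omega> h r x)"
proof -
  obtain K where "0 \<le> K"
    "\<And>y. y \<in> \<Omega> \<Longrightarrow> \<bar>bdist \<Omega> y powr \<epsilon> * truncated_potential \<Omega> h r y\<bar> \<le> K * bdist \<Omega> y powr (\<epsilon> / 2)"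
    using abs_weighted_truncated_potential_le[OF assms] by blast
  then have "continuous_on (closure \<Omega>)
      (\<lambda>x. if x \<in> \<Omega> then bdist \<Omega> x powr \<epsilon> * truncated_potential \<Omega> h r x else 0)"
    using \<open>0 < \<epsilon>\<close> by (intro continuous_on_closure_extend_zero[where a = "\<epsilon> / 2", OF assms(1)
        continuous_on_weighted_truncated_potential[OF assms(1-4)]]) auto
  then show ?thesis
    by (intro exI[of _ "\<lambda>x. if x \<in> \<Omega> then bdist \<Omega> x powr \<epsilon> * truncated_potential \<Omega> h r x else 0"]) auto
qed

lemma uniform_limit_weighted_truncated_potential:
  fixes h :: "'a::euclidean_space \<Rightarrow> real"
  assumes "open \<Omega>" "bounded \<Omega>" and [measurable]: "h \<in> borel_measurable borel"
    and h: "\<And>y. \<bar>h y\<bar> \<le> C" and "0 \<le> \<epsilon>"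
    and tail: "(\<integral>\<^sup>+s\<in>{1..}. ennreal (\<bar>spherical_mean h s\<bar> / s) \<partial>lborel) < \<infinity>"
  shows "\<exists>L. uniform_limit \<Omega> (\<lambda>r x. bdist \<Omega> x powr \<epsilon> * truncated_potential \<Omega> h r x) L at_top"
proof -
  obtain B where "0 < B" "\<Omega> \<subseteq> ball 0 B"
    using bounded_subset_ballD[OF assms(2), of 0] by blast
  define NV where "NV = real DIM('a) * measure lborel (ball (0::'a) 1)"
  define T where "T r = (\<integral>\<^sup>+s\<in>{r..}. ennreal (\<bar>spherical_mean h s\<bar> / s) \<partial>lborel)" for r
  define \<beta> where "\<beta> r = (2 * B) powr \<epsilon> * (C * real DIM('a) * B * 2 ^ Suc DIM('a) * NV / r + NV * enn2real (T r))"
    for r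
  have [measurable]: "\<Omega> \<in> sets borel"
    using assms(1) by simp
  have T_finite: "T r < \<infinity>" if "1 \<le> r" for r
  proof -
    have "T r \<le> T 1"
      unfolding T_def using that by (intro nn_integral_mono mult_left_mono) (auto simp: indicator_def)
    then show ?thesis
      using tail by (simp add: T_def le_less_trans)
  qed
  have "(T \<longlongrightarrow> 0) at_top"
    unfolding T_def using tail by (intro tendsto_nn_integral_tail) auto
  then have "((\<lambda>r. enn2real (T r)) \<longlongrightarrow> 0) at_top"
    by (intro tendsto_enn2real) simp_all
  moreover have "((\<lambda>r. C * real DIM('a) * B * 2 ^ Suc DIM('a) * NV / r) \<longlongrightarrow> 0) at_top"
    by (intro tendsto_divide_0[OF tendsto_const] filterlim_at_top_imp_at_infinity filterlim_ident)
  ultimately have "(\<beta> \<longlongrightarrow> 0) at_top"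
    unfolding \<beta>_def by (intro tendsto_mult_right_zero tendsto_add_zero tendsto_mult_right_zero)
  moreover have "dist (bdist \<Omega> x powr \<epsilon> * truncated_potential \<Omega> h R x)
      (bdist \<Omega> x powr \<epsilon> * truncated_potential \<Omega> h r x) \<le> \<beta> r"
    if "max 1 (2 * B) \<le> r" "r \<le> R" "x \<in> \<Omega>" for r R x
  proof -
    have "bdist \<Omega> x powr \<epsilon> \<le> (2 * B) powr \<epsilon>"
      using bdist_le_of_subset_ball[OF \<open>\<Omega> \<subseteq> ball 0 B\<close> \<open>x \<in> \<Omega>\<close>] \<open>0 \<le> \<epsilon>\<close>
      by (intro powr_mono2) (auto simp: bdist_def infdist_nonneg)
    moreover have "\<bar>truncated_potential \<Omega> h R x - truncated_potential \<Omega> h r x\<bar> \<le>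
        C * real DIM('a) * B * 2 ^ Suc DIM('a) * NV / r + NV * enn2real (T r)"
      using abs_truncated_potential_diff_le[OF _ assms(3) h bdist_pos[OF assms(1,2) \<open>x \<in> \<Omega>\<close>] _
          \<open>\<Omega> \<subseteq> ball 0 B\<close> _ _ _ \<open>r \<le> R\<close>] T_finite[of r] bdist_le_dist[OF \<open>x \<in> \<Omega>\<close>] that
        \<open>\<Omega> \<subseteq> ball 0 B\<close>
      by (fastforce simp: T_def NV_def dist_norm)
    ultimately show ?thesis
      unfolding \<beta>_def dist_real_def
      by (simp add: abs_mult right_diff_distrib[symmetric] mult_mono)
  qed
  ultimately show ?thesis
    by (rule uniform_limit_at_top_if_dist_le)
qed

lemma bounded_borel_representative:
  fixes g :: "'a::euclidean_space \<Rightarrow> real"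
  assumes [measurable]: "g \<in> borel_measurable lebesgue" "\<Omega> \<in> sets borel"
    and bound: "AE y in lebesgue. y \<notin> \<Omega> \<longrightarrow> \<bar>g y\<bar> \<le> C" and "0 \<le> C"
  obtains h where "h \<in> borel_measurable borel" "\<And>y. \<bar>h y\<bar> \<le> C"
    "AE y in lborel. (if y \<in> \<Omega> then 0 else g y) = h y"
proof -
  have [measurable]: "\<Omega> \<in> sets lebesgue"
    by (intro sets_completionI_sets) simp
  have "(\<lambda>y. if y \<in> \<Omega> then 0 else g y) \<in> borel_measurable lebesgue"
    by measurable
  then obtain h0 where [measurable]: "h0 \<in> borel_measurable lborel"
    and h0: "AE y in lborel. (if y \<in> \<Omega> then 0 else g y) = h0 y"
    using completion_ex_borel_measurable_real by blast
  define h where "h y = max (- C) (min C (h0 y))" for y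
  have "h \<in> borel_measurable borel"
    unfolding h_def by measurable
  moreover have "\<bar>h y\<bar> \<le> C" for y
    using \<open>0 \<le> C\<close> by (auto simp: h_def)
  moreover have "AE y in lborel. (if y \<in> \<Omega> then 0 else g y) = h y"
    using h0 bound[unfolded AE_completion_iff]
    by eventually_elim (use \<open>0 \<le> C\<close> in \<open>auto simp: h_def split: if_splits\<close>)
  ultimately show ?thesis
    using that by blast
qed

lemma set_integral_eq_truncated_potential:
  fixes g h :: "'a::euclidean_space \<Rightarrow> real"
  assumes [measurable]: "g \<in> borel_measurable lebesgue" "\<Omega> \<in> sets borel" "h \<in> borel_measurable borel"
    and ae: "AE y in lborel. (if y \<in> \<Omega> then 0 else g y) = h y"
  shows "(LINT y : ball 0 r - \<Omega> | lebesgue. g y / norm (x - y) ^ DIM('a)) = truncated_potential \<Omega> h r x"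
proof -
  have [measurable]: "ball (0::'a) r \<in> sets borel"
    by simp
  have [measurable]: "(\<lambda>y. indicator (ball 0 r - \<Omega>) y :: real) \<in> borel_measurable lebesgue"
    "(\<lambda>y. norm (x - y) ^ DIM('a)) \<in> borel_measurable lebesgue"
    by (rule measurable_completion, measurable)+
  have kernel: "(\<lambda>y. indicator (ball 0 r - \<Omega>) y * h y / norm (x - y) ^ DIM('a)) \<in> borel_measurable lborel"
    by measurable
  have "(LINT y : ball 0 r - \<Omega> | lebesgue. g y / norm (x - y) ^ DIM('a)) =
      (\<integral>y. indicator (ball 0 r - \<Omega>) y * h y / norm (x - y) ^ DIM('a) \<partial>lebesgue)"
    unfolding set_lebesgue_integral_def
  proof (rule integral_cong_AE)
    show "(\<lambda>y. indicator (ball 0 r - \<Omega>) y *\<^sub>R (g y / norm (x - y) ^ DIM('a))) \<in> borel_measurable lebesgue"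
      by measurable
    show "(\<lambda>y. indicator (ball 0 r - \<Omega>) y * h y / norm (x - y) ^ DIM('a)) \<in> borel_measurable lebesgue"
      using kernel by (rule measurable_completion)
    show "AE y in lebesgue. indicator (ball 0 r - \<Omega>) y *\<^sub>R (g y / norm (x - y) ^ DIM('a)) =
        indicator (ball 0 r - \<Omega>) y * h y / norm (x - y) ^ DIM('a)"
      using AE_completion[OF ae] by eventually_elim (auto simp: indicator_def split: if_splits)
  qed
  also have "\<dots> = truncated_potential \<Omega> h r x"
    unfolding truncated_potential_def by (rule integral_completion[OF kernel])
  finally show ?thesis .
qed

theorem lemma5p1:
  fixes \<Omega> :: "'a::euclidean_space set" and g :: "'a \<Rightarrow> real"
  assumes "DIM('a) \<ge> 2"
    and "bounded \<Omega>" and "open \<Omega>" and "C2_boundary \<Omega>"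
    and "g \<in> borel_measurable lebesgue"
    and "\<exists>C. AE y in lebesgue. y \<notin> \<Omega> \<longrightarrow> \<bar>g y\<bar> \<le> C"
    and "(\<integral>\<^sup>+ r \<in> {1..}. ennreal
            (\<bar>spherical_mean (\<lambda>y. if y \<in> \<Omega> then 0 else g y) r\<bar> / r) \<partial>lborel) < \<infinity>"
    and "\<epsilon> > (0::real)"
  shows "(\<forall>r > (SUP x\<in>\<Omega>. norm x) + diameter \<Omega> + 1.
            continuous_on \<Omega>
              (\<lambda>x. bdist \<Omega> x powr \<epsilon> *
                   (LINT y : ball 0 r - \<Omega> | lebesgue. g y / norm (x - y) ^ DIM('a))) \<and>
            (\<exists>G. continuous_on (closure \<Omega>) G \<and>
                 (\<forall>x\<in>\<Omega>. G x = bdist \<Omega> x powr \<epsilon> *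
                   (LINT y : ball 0 r - \<Omega> | lebesgue. g y / norm (x - y) ^ DIM('a))))) \<and>
         (\<exists>L. uniform_limit \<Omega>
                (\<lambda>r x. bdist \<Omega> x powr \<epsilon> *
                   (LINT y : ball 0 r - \<Omega> | lebesgue. g y / norm (x - y) ^ DIM('a)))
                L at_top)"
proof -
  have [measurable]: "\<Omega> \<in> sets borel"
    using \<open>open \<Omega>\<close> by simp
  obtain C0 where "AE y in lebesgue. y \<notin> \<Omega> \<longrightarrow> \<bar>g y\<bar> \<le> C0"
    using assms(6) by blast
  then have bound: "AE y in lebesgue. y \<notin> \<Omega> \<longrightarrow> \<bar>g y\<bar> \<le> max C0 0"
    by eventually_elim auto
  obtain h where h: "h \<in> borel_measurable borel" "\<And>y. \<bar>h y\<bar> \<le> max C0 0"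
    and ae: "AE y in lborel. (if y \<in> \<Omega> then 0 else g y) = h y"
    using bounded_borel_representative[OF assms(5) \<open>\<Omega> \<in> sets borel\<close> bound max.cobounded2] by blast
  have potential: "(LINT y : ball 0 r - \<Omega> | lebesgue. g y / norm (x - y) ^ DIM('a)) =
      truncated_potential \<Omega> h r x" for r x
    using set_integral_eq_truncated_potential[OF assms(5) _ h(1) ae] by simp
  have "AE s in lborel. ennreal (\<bar>spherical_mean h s\<bar> / s) * indicator {1..} s =
      ennreal (\<bar>spherical_mean (\<lambda>y. if y \<in> \<Omega> then 0 else g y) s\<bar> / s) * indicator {1..} s"
    using AE_spherical_mean_eq[OF h(1) ae] by eventually_elim (auto simp: indicator_def)
  then have "(\<integral>\<^sup>+s\<in>{1..}. ennreal (\<bar>spherical_mean h s\<bar> / s) \<partial>lborel) < \<infinity>"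
    using assms(7) by (simp add: nn_integral_cong_AE)
  then show ?thesis
    unfolding potential
    by (intro conjI allI impI continuous_on_weighted_truncated_potential[OF assms(3,2) h(1,2)]
        weighted_truncated_potential_extends[OF assms(3,2) h(1,2) assms(8)]
        uniform_limit_weighted_truncated_potential[OF assms(3,2) h(1,2) less_imp_le[OF assms(8)]])
qed

end
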